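(* Let $n\ge 2$ and $[n]=\{1,2,\ldots,n\}$. Call an $n\times n$ matrix with entries in $\{0,1\}$ a $\Lambda_n^2$-matrix if every row and every column contains exactly two entries equal to $1$. Let $\mathcal D_n$ be the set of all data $\Delta$ of the following form: \begin{enumerate} \item a tuple $(x_2,\ldots,x_n)$ of nonnegative integers with $2x_2+3x_3+\cdots+nx_n=n$; \item an ordered pair $(\mathbf C,\mathbf A)$ of partitions of $[n]$, each having exactly $x_k$ blocks of cardinality $k$ for every $k=2,\ldots,n$ (and hence no blocks of size $1$). For each $k$ with $x_k\neq 0$, the size-$k$ blocks of $\mathbf C$ are listed as $C^{(k)}_1,\ldots,C^{(k)}_{x_k}$ and those of $\mathbf A$ as $A^{(k)}_1,\ldots,A^{(k)}_{x_k}$, each list in a fixed order determined by the partition (for instance, increasing order of the least elements of the blocks); \item for each $k$ with $x_k\neq 0$, a permutation $\rho_k\in S_{x_k}$; \item for each such $k$ and each $i=1,\ldots,x_k$: \begin{itemize} \item an ordering $c_2,c_3,\ldots,c_k$ of the set $C^{(k)}_i\setminus\{c_1\}$, where $c_1=\min C^{(k)}_i$; \item an ordering $a_1,a_2,\ldots,a_k$ of the set $A^{(k)}_{\rho_k(i)}$ satisfying $a_1<a_2$. \end{itemize} \end{enumerate} To such data $\Delta$ associate the set $R(\Delta)$ of triples consisting of \[ (c_1,a_1,a_2),\ (c_2,a_2,a_3),\ \ldots,\ (c_{k-1},a_{k-1},a_k),\ (c_k,a_k,a_1), \] taken over all $k$ with $x_k\neq 0$ and all $i=1,\ldots,x_k$,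 where the $c_j$ and $a_j$ are those chosen for the pair $(k,i)$. Let $\Phi(\Delta)$ be the $n\times n$ binary matrix whose column $c$ has its entries equal to $1$ exactly in rows $u$ and $v$, where $(c,u,v)$ is a triple in $R(\Delta)$. Then: \begin{itemize} \item for every $\Delta\in\mathcal D_n$, the matrix $\Phi(\Delta)$ is a well-defined $\Lambda_n^2$-matrix; \item distinct data $\Delta\neq\Delta'$ give distinct matrices $\Phi(\Delta)\neq\Phi(\Delta')$; \item every $\Lambda_n^2$-matrix equals $\Phi(\Delta)$ for some $\Delta\in\mathcal D_n$. \end{itemize} Thus $\Phi$ is a bijection from $\mathcal D_n$ onto the set of all $\Lambda_n^2$-matrices.
   Context: $S_m$ denotes the symmetric group on $\{1,\ldots,m\}$. A partition of a set $M$ is a family of pairwise disjoint subsets, called blocks, whose union is $M$. "Well-defined" in the claim means that every $c\in[n]$ occurs as the first coordinate of exactly one triple in $R(\Delta)$, and that triple has $u\neq v$. *)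

theory Defs
  imports "HOL-Library.Disjoint_Sets" "HOL-Combinatorics.Permutations"
begin

text \<open>Lambda_n^2 matrices: M r c is the entry in row r, column c (indices in {1..n});
  entries outside [n] x [n] are 0, so that matrices are compared as functions.\<close>
definition Lambda2 :: "nat \<Rightarrow> (nat \<Rightarrow> nat \<Rightarrow> nat) set" where
  "Lambda2 n = {M. (\<forall>r c. M r c \<in> {0,1}) \<and>
      (\<forall>r c. (r \<notin> {1..n} \<or> c \<notin> {1..n}) \<longrightarrow> M r c = 0) \<and>
      (\<forall>r\<in>{1..n}. card {c\<in>{1..n}. M r c = 1} = 2) \<and>
      (\<forall>c\<in>{1..n}. card {r\<in>{1..n}. M r c = 1} = 2)}"

text \<open>Field meanings:
  xs k       = x_k (k = 2..n; 0 for other k),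
  CP, AP     = the partitions C and A of [n],
  rho k      = the permutation rho_k of {1..x_k} (identity when x_k = 0),
  cord k i   = the list [c_2,...,c_k] for block C^(k)_i,
  aord k i   = the list [a_1,...,a_k] ordering A^(k)_(rho_k i)
  (cord/aord are [] for pairs (k,i) that do not occur).\<close>
record data =
  xs :: "nat \<Rightarrow> nat"
  CP :: "nat set set"
  AP :: "nat set set"
  rho :: "nat \<Rightarrow> nat \<Rightarrow> nat"
  cord :: "nat \<Rightarrow> nat \<Rightarrow> nat list"
  aord :: "nat \<Rightarrow> nat \<Rightarrow> nat list"

definition blk :: "nat set set \<Rightarrow> nat \<Rightarrow> nat \<Rightarrow> nat set" where
  "blk P k i = sorted_key_list_of_set Min {B\<in>P. card B = k} ! (i - 1)"

definition Dn :: "nat \<Rightarrow> data set" where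
  "Dn n = {D.
     (\<forall>k. k \<notin> {2..n} \<longrightarrow> xs D k = 0) \<and>
     (\<Sum>k=2..n. k * xs D k) = n \<and>
     partition_on {1..n} (CP D) \<and> partition_on {1..n} (AP D) \<and>
     (\<forall>k\<in>{2..n}. card {B\<in>CP D. card B = k} = xs D k) \<and>
     (\<forall>k\<in>{2..n}. card {B\<in>AP D. card B = k} = xs D k) \<and>
     (\<forall>k. rho D k permutes {1..xs D k}) \<and>
     (\<forall>k i. if k \<in> {2..n} \<and> i \<in> {1..xs D k}
        then distinct (cord D k i) \<and>
             set (cord D k i) = blk (CP D) k i - {Min (blk (CP D) k i)} \<and>
             distinct (aord D k i) \<and>
             set (aord D k i) = blk (AP D) k (rho D k i) \<and>
             aord D k i ! 0 < aord D k i ! 1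
        else cord D k i = [] \<and> aord D k i = [])}"

definition Rtrip :: "nat \<Rightarrow> data \<Rightarrow> (nat \<times> nat \<times> nat) set" where
  "Rtrip n D = (\<Union>k\<in>{2..n}. \<Union>i\<in>{1..xs D k}.
     (let cl = Min (blk (CP D) k i) # cord D k i; al = aord D k i in
      {(cl ! j, al ! j, al ! ((j + 1) mod k)) | j. j < k}))"

definition Phi :: "nat \<Rightarrow> data \<Rightarrow> (nat \<Rightarrow> nat \<Rightarrow> nat)" where
  "Phi n D = (\<lambda>r c. if r \<in> {1..n} \<and> c \<in> {1..n} \<and>
        (\<exists>u v. (c, u, v) \<in> Rtrip n D \<and> (r = u \<or> r = v)) then 1 else 0)"

definition well_defined :: "nat \<Rightarrow> data \<Rightarrow> bool" where
  "well_defined n D \<longleftrightarrow>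
     (\<forall>c\<in>{1..n}. \<exists>!uv. (c, fst uv, snd uv) \<in> Rtrip n D) \<and>
     (\<forall>c\<in>{1..n}. \<forall>u v. (c, u, v) \<in> Rtrip n D \<longrightarrow> u \<noteq> v)"

end

theory Submission
  imports Defs
begin

text \<open>Read a binary matrix as a bipartite graph on columns and rows, column \<open>c\<close> adjacent to the
  rows of its ones. The datum of one pair \<open>(k, i)\<close> yields the cycle
  \<open>c\<^sub>1 a\<^sub>2 c\<^sub>2 a\<^sub>3 \<dots> c\<^sub>k a\<^sub>1\<close> of length \<open>2k\<close>,
  so \<open>\<Phi>(\<Delta>)\<close> is 2-regular, i.e. a \<open>\<Lambda>\<^sub>n\<^sup>2\<close>-matrix. Conversely the
  graph of a \<open>\<Lambda>\<^sub>n\<^sup>2\<close>-matrix is 2-regular, hence a disjoint union of cycles, and walking along each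
  cycle produces the lists \<open>c\<^sub>j\<close> and \<open>a\<^sub>j\<close>. The column sets of the cycles are the connected
  components, which recovers \<open>C\<close>; starting the walk at the least column and leaving it through
  its smaller row is exactly the normalisation \<open>c\<^sub>1 = min\<close>, \<open>a\<^sub>1 < a\<^sub>2\<close>, so the walk, and with it
  all of \<open>\<Delta>\<close>, is determined by the matrix.\<close>

lemma Suc_mod_eq_iff:
  fixes L j j' :: nat
  assumes "j < L" "j' < L"
  shows "(j' + 1) mod L = j \<longleftrightarrow> j' = (j + L - 1) mod L"
proof -
  have "(j + L - 1) mod L = (if j = 0 then L - 1 else j - 1)"
    using assms by (cases "j = 0") (simp_all add: mod_if)
  moreover have "(j' + 1) mod L = (if j' + 1 = L then 0 else j' + 1)"
    using assms by (simp add: mod_if)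
  ultimately show ?thesis using assms by auto
qed

lemma Suc_mod_neq:
  fixes L j :: nat
  assumes "2 \<le> L" "j < L"
  shows "(j + 1) mod L \<noteq> j" "(j + L - 1) mod L \<noteq> j"
  using assms by (auto simp: mod_if)

definition other :: "'a set \<Rightarrow> 'a \<Rightarrow> 'a" where
  "other S x = (THE y. y \<in> S \<and> y \<noteq> x)"

lemma other_eq_iff:
  assumes "card S = 2" "x \<in> S"
  shows "other S x = y \<longleftrightarrow> y \<in> S \<and> y \<noteq> x"
proof -
  obtain a b where "S = {a, b}" "a \<noteq> b" using assms(1) card_2_iff by metis
  then have "\<exists>!y. y \<in> S \<and> y \<noteq> x" using assms(2) by auto
  then have "other S x \<in> S \<and> other S x \<noteq> x" unfolding other_def by (rule theI')
  then show ?thesis using \<open>\<exists>!y. y \<in> S \<and> y \<noteq> x\<close> by blast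
qed

lemma other_mem:
  assumes "card S = 2" "x \<in> S"
  shows "other S x \<in> S" "other S x \<noteq> x"
  using other_eq_iff[OF assms] by blast+

lemma other_inj:
  assumes "card S = 2" "x \<in> S" "y \<in> S" "other S x = other S y"
  shows "x = y"
proof (rule ccontr)
  assume "x \<noteq> y"
  then have "other S x = y" using other_eq_iff[OF assms(1,2)] assms(3) by blast
  then show False using other_mem(2)[OF assms(1,3)] assms(4) by simp
qed

lemma card_2_eqI: "card S = 2 \<Longrightarrow> x \<in> S \<Longrightarrow> y \<in> S \<Longrightarrow> x \<noteq> y \<Longrightarrow> S = {x, y}"
  by (auto simp: card_2_iff)

lemma doubleton_cancel: "{a, b} = {a, c} \<Longrightarrow> b = c"
  by (auto simp: doubleton_eq_iff)

lemma funpow_mem: "f ` S \<subseteq> S \<Longrightarrow> x \<in> S \<Longrightarrow> (f ^^ k) x \<in> S"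
  by (induction k) auto

lemma inj_on_funpow: "inj_on f S \<Longrightarrow> f ` S \<subseteq> S \<Longrightarrow> inj_on (f ^^ k) S"
proof (induction k)
  case (Suc k)
  then have "inj_on (f \<circ> (f ^^ k)) S"
    by (intro comp_inj_on) (auto intro: inj_on_subset funpow_mem)
  then show ?case by (simp add: comp_def)
qed simp

lemma funpow_period_exists:
  assumes "finite S" "inj_on f S" "f ` S \<subseteq> S" "x \<in> S"
  shows "\<exists>p>0. (f ^^ p) x = x"
proof -
  have "\<not> inj_on (\<lambda>k. (f ^^ k) x) {0..card S}"
  proof
    assume inj: "inj_on (\<lambda>k. (f ^^ k) x) {0..card S}"
    have "(\<lambda>k. (f ^^ k) x) ` {0..card S} \<subseteq> S" using funpow_mem[OF assms(3,4)] by blast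
    from card_inj_on_le[OF inj this assms(1)] show False by simp
  qed
  then obtain a b where ab: "a \<noteq> b" "(f ^^ a) x = (f ^^ b) x" unfolding inj_on_def by blast
  obtain i j where ij: "i < j" "(f ^^ i) x = (f ^^ j) x"
  proof (cases "a < b")
    case True
    then show thesis using that ab by blast
  next
    case False
    then have "b < a" using ab(1) by simp
    then show thesis using that ab(2) by simp
  qed
  have "(f ^^ i) ((f ^^ (j - i)) x) = (f ^^ (i + (j - i))) x" by (simp only: funpow_add o_apply)
  also have "\<dots> = (f ^^ j) x" using less_imp_le[OF ij(1)] by (simp only: le_add_diff_inverse)
  also have "\<dots> = (f ^^ i) x" using ij(2) by (rule sym)
  finally have "(f ^^ i) ((f ^^ (j - i)) x) = (f ^^ i) x" .
  then have "(f ^^ (j - i)) x = x"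
    by (rule inj_onD[OF inj_on_funpow[OF assms(2,3)] _ funpow_mem[OF assms(3,4)] assms(4)])
  then show ?thesis using ij(1) by (intro exI[of _ "j - i"]) simp
qed

definition col_ones :: "nat \<Rightarrow> (nat \<Rightarrow> nat \<Rightarrow> nat) \<Rightarrow> nat \<Rightarrow> nat set" where
  "col_ones n M c = {r \<in> {1..n}. M r c = 1}"

definition row_ones :: "nat \<Rightarrow> (nat \<Rightarrow> nat \<Rightarrow> nat) \<Rightarrow> nat \<Rightarrow> nat set" where
  "row_ones n M r = {c \<in> {1..n}. M r c = 1}"

definition binary_matrix :: "nat \<Rightarrow> (nat \<Rightarrow> nat \<Rightarrow> nat) \<Rightarrow> bool" where
  "binary_matrix n M \<longleftrightarrow>
     (\<forall>r c. M r c \<in> {0, 1}) \<and> (\<forall>r c. (r \<notin> {1..n} \<or> c \<notin> {1..n}) \<longrightarrow> M r c = 0)"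

lemma Lambda2_iff:
  "M \<in> Lambda2 n \<longleftrightarrow> binary_matrix n M \<and>
     (\<forall>r\<in>{1..n}. card (row_ones n M r) = 2) \<and> (\<forall>c\<in>{1..n}. card (col_ones n M c) = 2)"
  by (simp add: Lambda2_def binary_matrix_def row_ones_def col_ones_def)

lemma binary_matrix_eqI:
  assumes "binary_matrix n M" "binary_matrix n M'"
    and "\<And>c. c \<in> {1..n} \<Longrightarrow> col_ones n M c = col_ones n M' c"
  shows "M = M'"
proof (intro ext)
  fix r c
  show "M r c = M' r c"
  proof (cases "r \<in> {1..n} \<and> c \<in> {1..n}")
    case True
    then have "M r c = 1 \<longleftrightarrow> M' r c = 1"
      using assms(3)[of c] unfolding col_ones_def by blast
    then show ?thesis using assms(1,2) unfolding binary_matrix_def by (metis insertE singletonD)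
  next
    case False
    then show ?thesis using assms(1,2) unfolding binary_matrix_def by auto
  qed
qed

lemma mem_row_ones_iff_mem_col_ones:
  "r \<in> {1..n} \<Longrightarrow> c \<in> {1..n} \<Longrightarrow> c \<in> row_ones n M r \<longleftrightarrow> r \<in> col_ones n M c"
  by (simp add: col_ones_def row_ones_def)

definition triple_matrix :: "nat \<Rightarrow> (nat \<times> nat \<times> nat) set \<Rightarrow> nat \<Rightarrow> nat \<Rightarrow> nat" where
  "triple_matrix n R = (\<lambda>r c. if r \<in> {1..n} \<and> c \<in> {1..n} \<and>
      (\<exists>u v. (c, u, v) \<in> R \<and> (r = u \<or> r = v)) then 1 else 0)"

lemma Phi_eq_triple_matrix: "Phi n D = triple_matrix n (Rtrip n D)"
  unfolding Phi_def triple_matrix_def ..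

lemma binary_matrix_triple_matrix: "binary_matrix n (triple_matrix n R)"
  by (simp add: binary_matrix_def triple_matrix_def)

lemma col_ones_triple_matrix:
  "c \<in> {1..n} \<Longrightarrow>
    col_ones n (triple_matrix n R) c = {r \<in> {1..n}. \<exists>u v. (c, u, v) \<in> R \<and> (r = u \<or> r = v)}"
  by (auto simp: col_ones_def triple_matrix_def)

definition column_adj :: "nat \<Rightarrow> (nat \<Rightarrow> nat \<Rightarrow> nat) \<Rightarrow> (nat \<times> nat) set" where
  "column_adj n M = {(c, c'). c \<in> {1..n} \<and> c' \<in> {1..n} \<and> (\<exists>r\<in>{1..n}. M r c = 1 \<and> M r c' = 1)}"

definition column_class :: "nat \<Rightarrow> (nat \<Rightarrow> nat \<Rightarrow> nat) \<Rightarrow> nat \<Rightarrow> nat set" where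
  "column_class n M c = (column_adj n M)\<^sup>* `` {c}"

definition column_classes :: "nat \<Rightarrow> (nat \<Rightarrow> nat \<Rightarrow> nat) \<Rightarrow> nat set set" where
  "column_classes n M = column_class n M ` {1..n}"

lemma column_adj_iff:
  "(c, c') \<in> column_adj n M \<longleftrightarrow>
     c \<in> {1..n} \<and> c' \<in> {1..n} \<and> (\<exists>r. r \<in> col_ones n M c \<and> r \<in> col_ones n M c')"
  by (auto simp: column_adj_def col_ones_def)

lemma self_in_column_class: "c \<in> column_class n M c"
  by (simp add: column_class_def)

lemma column_class_subset: "c \<in> {1..n} \<Longrightarrow> column_class n M c \<subseteq> {1..n}"
  by (auto simp: column_class_def column_adj_def elim: rtranclE)

lemma column_class_eq_if_mem:
  assumes "c' \<in> column_class n M c"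
  shows "column_class n M c' = column_class n M c"
proof -
  have "sym ((column_adj n M)\<^sup>*)" by (rule sym_rtrancl) (auto simp: column_adj_def sym_def)
  then have "(c', c) \<in> (column_adj n M)\<^sup>*" using assms by (auto simp: column_class_def dest: symD)
  with assms show ?thesis
    unfolding column_class_def by (auto intro: rtrancl_trans)
qed

lemma partition_on_column_classes: "partition_on {1..n} (column_classes n M)"
proof (rule partition_onI)
  show "\<Union> (column_classes n M) = {1..n}"
    using column_class_subset self_in_column_class by (fastforce simp: column_classes_def)
  show "disjnt B B'" if "B \<in> column_classes n M" "B' \<in> column_classes n M" "B \<noteq> B'" for B B'
  proof -
    obtain c c' where B: "B = column_class n M c" "B' = column_class n M c'"
      using \<open>B \<in> column_classes n M\<close> \<open>B' \<in> column_classes n M\<close> by (auto simp: column_classes_def)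
    have "x \<notin> B'" if "x \<in> B" for x
      using \<open>B \<noteq> B'\<close> column_class_eq_if_mem[of x n M c] column_class_eq_if_mem[of x n M c'] that B
      by auto
    then show ?thesis by (auto simp: disjnt_def)
  qed
  show "{} \<notin> column_classes n M"
    using self_in_column_class by (fastforce simp: column_classes_def)
qed

section \<open>Cycle families\<close>

definition cycle_triples ::
    "'i set \<Rightarrow> ('i \<Rightarrow> nat) \<Rightarrow> ('i \<Rightarrow> nat list) \<Rightarrow> ('i \<Rightarrow> nat list) \<Rightarrow> (nat \<times> nat \<times> nat) set" where
  "cycle_triples I L CL AL =
     (\<Union>p\<in>I. {(CL p ! j, AL p ! j, AL p ! ((j + 1) mod L p)) | j. j < L p})"

lemma cycle_triples_reindex:
  assumes "\<And>q. q \<in> J \<Longrightarrow> L' q = L (h q) \<and> CL' q = CL (h q) \<and> AL' q = AL (h q)"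
  shows "cycle_triples J L' CL' AL' = cycle_triples (h ` J) L CL AL"
  unfolding cycle_triples_def using assms by (auto 0 4)

text \<open>\<open>CL p = [c\<^sub>1, \<dots>, c\<^sub>k]\<close> and \<open>AL p = [a\<^sub>1, \<dots>, a\<^sub>k]\<close> are the two lists of one cycle \<open>p\<close> of
  length \<open>k = L p\<close>; the columns, respectively the rows, of all cycles partition \<open>[n]\<close>.\<close>
locale cycle_family =
  fixes n :: nat and I :: "'i set" and L :: "'i \<Rightarrow> nat" and CL AL :: "'i \<Rightarrow> nat list"
  assumes two_le_L: "p \<in> I \<Longrightarrow> 2 \<le> L p"
    and length_CL: "p \<in> I \<Longrightarrow> length (CL p) = L p"
    and length_AL: "p \<in> I \<Longrightarrow> length (AL p) = L p"
    and distinct_CL: "p \<in> I \<Longrightarrow> distinct (CL p)"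
    and distinct_AL: "p \<in> I \<Longrightarrow> distinct (AL p)"
    and UN_set_CL: "(\<Union>p\<in>I. set (CL p)) = {1..n}"
    and UN_set_AL: "(\<Union>p\<in>I. set (AL p)) = {1..n}"
    and set_CL_disjoint: "p \<in> I \<Longrightarrow> q \<in> I \<Longrightarrow> x \<in> set (CL p) \<Longrightarrow> x \<in> set (CL q) \<Longrightarrow> p = q"
    and set_AL_disjoint: "p \<in> I \<Longrightarrow> q \<in> I \<Longrightarrow> x \<in> set (AL p) \<Longrightarrow> x \<in> set (AL q) \<Longrightarrow> p = q"
begin

abbreviation R :: "(nat \<times> nat \<times> nat) set" where
  "R \<equiv> cycle_triples I L CL AL"

abbreviation M :: "nat \<Rightarrow> nat \<Rightarrow> nat" where
  "M \<equiv> triple_matrix n R"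

lemma mem_R_iff:
  "(c, u, v) \<in> R \<longleftrightarrow>
     (\<exists>p\<in>I. \<exists>j<L p. c = CL p ! j \<and> u = AL p ! j \<and> v = AL p ! ((j + 1) mod L p))"
  unfolding cycle_triples_def by blast

lemma CL_nth_in: "p \<in> I \<Longrightarrow> j < L p \<Longrightarrow> CL p ! j \<in> {1..n}"
  using UN_set_CL length_CL by (metis UN_I nth_mem)

lemma AL_nth_in: "p \<in> I \<Longrightarrow> j < L p \<Longrightarrow> AL p ! j \<in> {1..n}"
  using UN_set_AL length_AL by (metis UN_I nth_mem)

lemma obtain_CL_index:
  assumes "c \<in> {1..n}"
  obtains p j where "p \<in> I" "j < L p" "CL p ! j = c"
proof -
  obtain p where "p \<in> I" "c \<in> set (CL p)" using UN_set_CL assms by blast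
  then show ?thesis using that length_CL by (metis in_set_conv_nth)
qed

lemma obtain_AL_index:
  assumes "r \<in> {1..n}"
  obtains p j where "p \<in> I" "j < L p" "AL p ! j = r"
proof -
  obtain p where "p \<in> I" "r \<in> set (AL p)" using UN_set_AL assms by blast
  then show ?thesis using that length_AL by (metis in_set_conv_nth)
qed

lemma CL_nth_eq_iff:
  "p \<in> I \<Longrightarrow> q \<in> I \<Longrightarrow> j < L p \<Longrightarrow> j' < L q \<Longrightarrow> CL p ! j = CL q ! j' \<longleftrightarrow> p = q \<and> j = j'"
  using set_CL_disjoint[of p q "CL p ! j"] length_CL distinct_CL nth_eq_iff_index_eq
  by (metis nth_mem)

lemma AL_nth_eq_iff:
  "p \<in> I \<Longrightarrow> q \<in> I \<Longrightarrow> j < L p \<Longrightarrow> j' < L q \<Longrightarrow> AL p ! j = AL q ! j' \<longleftrightarrow> p = q \<and> j = j'"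
  using set_AL_disjoint[of p q "AL p ! j"] length_AL distinct_AL nth_eq_iff_index_eq
  by (metis nth_mem)

lemma AL_nth_Suc_neq: "p \<in> I \<Longrightarrow> j < L p \<Longrightarrow> AL p ! j \<noteq> AL p ! ((j + 1) mod L p)"
  using AL_nth_eq_iff Suc_mod_neq(1) two_le_L
  by (metis mod_less_divisor not_numeral_le_zero zero_less_iff_neq_zero)

lemma CL_nth_pred_neq: "p \<in> I \<Longrightarrow> j < L p \<Longrightarrow> CL p ! j \<noteq> CL p ! ((j + L p - 1) mod L p)"
  using CL_nth_eq_iff Suc_mod_neq(2) two_le_L
  by (metis mod_less_divisor not_numeral_le_zero zero_less_iff_neq_zero)

lemma col_ones_CL_nth:
  assumes "p \<in> I" "j < L p"
  shows "col_ones n M (CL p ! j) = {AL p ! j, AL p ! ((j + 1) mod L p)}"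
proof -
  have "(j + 1) mod L p < L p" using two_le_L[OF assms(1)] by simp
  then have in_n: "AL p ! j \<in> {1..n}" "AL p ! ((j + 1) mod L p) \<in> {1..n}"
    using AL_nth_in assms by auto
  have "(CL p ! j, u, v) \<in> R \<longleftrightarrow> u = AL p ! j \<and> v = AL p ! ((j + 1) mod L p)" for u v
    using assms CL_nth_eq_iff by (auto simp: mem_R_iff)
  then show ?thesis
    using col_ones_triple_matrix[OF CL_nth_in[OF assms]] in_n by auto
qed

lemma row_ones_AL_nth:
  assumes "p \<in> I" "j < L p"
  shows "row_ones n M (AL p ! j) = {CL p ! j, CL p ! ((j + L p - 1) mod L p)}"
proof -
  define j' where "j' = (j + L p - 1) mod L p"
  have j': "j' < L p" "(j' + 1) mod L p = j"
    using Suc_mod_eq_iff[OF assms(2)] two_le_L[OF assms(1)] by (simp_all add: j'_def)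
  have "c \<in> row_ones n M (AL p ! j) \<longleftrightarrow> c = CL p ! j \<or> c = CL p ! j'" if c: "c \<in> {1..n}" for c
  proof -
    obtain q i where q: "q \<in> I" "i < L q" "CL q ! i = c" using obtain_CL_index[OF c] .
    have "(i + 1) mod L q < L q" using two_le_L[OF q(1)] by simp
    then have "c \<in> row_ones n M (AL p ! j) \<longleftrightarrow> (q = p \<and> i = j) \<or> (q = p \<and> (i + 1) mod L q = j)"
      using mem_row_ones_iff_mem_col_ones[OF AL_nth_in[OF assms] c] col_ones_CL_nth[OF q(1,2)]
        q assms AL_nth_eq_iff by auto
    also have "\<dots> \<longleftrightarrow> (q = p \<and> i = j) \<or> (q = p \<and> i = j')"
      using Suc_mod_eq_iff[OF assms(2)] q(2) j'_def by auto
    also have "\<dots> \<longleftrightarrow> c = CL p ! j \<or> c = CL p ! j'"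
      using CL_nth_eq_iff q assms j'(1) by auto
    finally show ?thesis .
  qed
  moreover have "CL p ! j \<in> {1..n}" "CL p ! j' \<in> {1..n}" using CL_nth_in assms j' by auto
  moreover have "row_ones n M (AL p ! j) \<subseteq> {1..n}" by (auto simp: row_ones_def)
  ultimately show ?thesis unfolding j'_def[symmetric] by blast
qed

lemma cycle_matrix_in_Lambda2: "M \<in> Lambda2 n"
  unfolding Lambda2_iff
proof (intro conjI ballI binary_matrix_triple_matrix)
  fix r assume "r \<in> {1..n}"
  then obtain p j where pj: "p \<in> I" "j < L p" "AL p ! j = r" by (rule obtain_AL_index)
  then show "card (row_ones n M r) = 2" using row_ones_AL_nth CL_nth_pred_neq by fastforce
next
  fix c assume "c \<in> {1..n}"
  then obtain p j where pj: "p \<in> I" "j < L p" "CL p ! j = c" by (rule obtain_CL_index)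
  then show "card (col_ones n M c) = 2" using col_ones_CL_nth AL_nth_Suc_neq by fastforce
qed

lemma cycle_triples_well_defined:
  "(\<forall>c\<in>{1..n}. \<exists>!uv. (c, fst uv, snd uv) \<in> R) \<and> (\<forall>c\<in>{1..n}. \<forall>u v. (c, u, v) \<in> R \<longrightarrow> u \<noteq> v)"
proof (intro conjI ballI allI impI)
  fix c assume "c \<in> {1..n}"
  then obtain p j where pj: "p \<in> I" "j < L p" "CL p ! j = c" by (rule obtain_CL_index)
  have "(c, u, v) \<in> R \<longleftrightarrow> u = AL p ! j \<and> v = AL p ! ((j + 1) mod L p)" for u v
    using pj CL_nth_eq_iff by (auto simp: mem_R_iff)
  then show "\<exists>!uv. (c, fst uv, snd uv) \<in> R" by (simp add: prod_eq_iff Ex1_def)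
next
  fix c u v assume "(c, u, v) \<in> R"
  then show "u \<noteq> v" using AL_nth_Suc_neq by (auto simp: mem_R_iff)
qed

lemma column_adj_CL_nth_Suc:
  assumes "p \<in> I" "Suc j < L p"
  shows "(CL p ! j, CL p ! Suc j) \<in> column_adj n M"
  using col_ones_CL_nth[OF assms(1)] assms CL_nth_in
  unfolding column_adj_iff by (intro conjI exI[of _ "AL p ! Suc j"]) auto

lemma column_adj_closed:
  assumes "p \<in> I" "c \<in> set (CL p)" "(c, c') \<in> column_adj n M"
  shows "c' \<in> set (CL p)"
proof -
  obtain j where j: "j < L p" "c = CL p ! j" using assms(2) length_CL[OF assms(1)]
    by (metis in_set_conv_nth)
  obtain r where r: "r \<in> col_ones n M c" "r \<in> col_ones n M c'" and c': "c' \<in> {1..n}"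
    using assms(3) by (auto simp: column_adj_iff)
  have "r = AL p ! j \<or> r = AL p ! ((j + 1) mod L p)"
    using r(1) col_ones_CL_nth[OF assms(1) j(1)] j(2) by auto
  moreover have "(j + 1) mod L p < L p" using two_le_L[OF assms(1)] by simp
  ultimately obtain i where i: "i < L p" "r = AL p ! i" using j(1) by blast
  have "c' \<in> row_ones n M (AL p ! i)"
    using mem_row_ones_iff_mem_col_ones[OF AL_nth_in[OF assms(1) i(1)] c'] r(2) i(2) by simp
  moreover have "(i + L p - 1) mod L p < L p" using two_le_L[OF assms(1)] by simp
  ultimately show ?thesis
    using row_ones_AL_nth[OF assms(1) i(1)] i(1) length_CL[OF assms(1)] by (auto intro: nth_mem)
qed

lemma column_class_CL:
  assumes "p \<in> I" "c \<in> set (CL p)"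
  shows "column_class n M c = set (CL p)"
proof
  show "column_class n M c \<subseteq> set (CL p)"
  proof
    fix c' assume "c' \<in> column_class n M c"
    then have "(c, c') \<in> (column_adj n M)\<^sup>*" by (simp add: column_class_def)
    then show "c' \<in> set (CL p)"
    proof (induction rule: rtrancl_induct)
      case (step c' c'')
      show ?case by (rule column_adj_closed[OF assms(1) step.IH step.hyps(2)])
    qed (rule assms(2))
  qed
next
  have from_first: "CL p ! j \<in> column_class n M (CL p ! 0)" if "j < L p" for j
    using that
  proof (induction j)
    case (Suc j)
    then have "(CL p ! 0, CL p ! j) \<in> (column_adj n M)\<^sup>*" by (simp add: column_class_def)
    then have "(CL p ! 0, CL p ! Suc j) \<in> (column_adj n M)\<^sup>*"
      using column_adj_CL_nth_Suc[OF assms(1) Suc.prems] by (rule rtrancl_into_rtrancl)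
    then show ?case by (simp add: column_class_def)
  qed (simp add: self_in_column_class)
  obtain j where "j < L p" "c = CL p ! j" using assms(2) length_CL[OF assms(1)]
    by (metis in_set_conv_nth)
  then have "column_class n M c = column_class n M (CL p ! 0)"
    using from_first column_class_eq_if_mem by blast
  moreover have "set (CL p) \<subseteq> column_class n M (CL p ! 0)"
    using from_first length_CL[OF assms(1)] by (auto simp: in_set_conv_nth)
  ultimately show "set (CL p) \<subseteq> column_class n M c" by simp
qed

lemma column_classes_cycle_matrix: "column_classes n M = (\<lambda>p. set (CL p)) ` I"
proof
  show "column_classes n M \<subseteq> (\<lambda>p. set (CL p)) ` I"
  proof
    fix B assume "B \<in> column_classes n M"
    then obtain c where c: "c \<in> {1..n}" "B = column_class n M c" by (auto simp: column_classes_def)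
    then obtain p where "p \<in> I" "c \<in> set (CL p)" using UN_set_CL by blast
    then show "B \<in> (\<lambda>p. set (CL p)) ` I" using column_class_CL c(2) by blast
  qed
  show "(\<lambda>p. set (CL p)) ` I \<subseteq> column_classes n M"
  proof
    fix B assume "B \<in> (\<lambda>p. set (CL p)) ` I"
    then obtain p where p: "p \<in> I" "B = set (CL p)" by blast
    have "0 < L p" using two_le_L[OF p(1)] by simp
    then have "CL p ! 0 \<in> set (CL p)" "CL p ! 0 \<in> {1..n}"
      using length_CL[OF p(1)] CL_nth_in[OF p(1)] by auto
    then show "B \<in> column_classes n M"
      using column_class_CL[OF p(1)] p(2) unfolding column_classes_def by (metis image_eqI)
  qed
qed

end

lemma cycle_lists_unique:
  assumes F: "cycle_family n I L CL AL" and F': "cycle_family n I L CL' AL'"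
    and same_matrix:
      "triple_matrix n (cycle_triples I L CL AL) = triple_matrix n (cycle_triples I L CL' AL')"
    and p: "p \<in> I" and first: "CL p ! 0 = CL' p ! 0"
    and increasing: "AL p ! 0 < AL p ! 1" "AL' p ! 0 < AL' p ! 1"
  shows "CL p = CL' p \<and> AL p = AL' p"
proof -
  interpret A: cycle_family n I L CL AL by (rule F)
  interpret B: cycle_family n I L CL' AL' by (rule F')
  have L: "2 \<le> L p" using A.two_le_L[OF p] .
  have agree: "CL p ! j = CL' p ! j \<and> AL p ! j = AL' p ! j \<and>
      AL p ! ((j + 1) mod L p) = AL' p ! ((j + 1) mod L p)" if "j < L p" for j
    using that
  proof (induction j)
    case 0
    have "{AL p ! 0, AL p ! 1} = {AL' p ! 0, AL' p ! 1}"
      using A.col_ones_CL_nth[OF p, of 0] B.col_ones_CL_nth[OF p, of 0] same_matrix first L by simp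
    then have "AL p ! 0 = AL' p ! 0 \<and> AL p ! 1 = AL' p ! 1"
      using increasing by (auto simp: doubleton_eq_iff)
    then show ?case using first L by simp
  next
    case (Suc j)
    have j: "j < L p" "(j + 1) mod L p = Suc j" "(Suc j + L p - 1) mod L p = j"
      using Suc.prems by simp_all
    note IH = Suc.IH[OF j(1)]
    have a: "AL p ! Suc j = AL' p ! Suc j" using IH j(2) by simp
    have "{CL p ! j, CL p ! Suc j} = {CL p ! j, CL' p ! Suc j}"
      using A.row_ones_AL_nth[OF p Suc.prems] B.row_ones_AL_nth[OF p Suc.prems] same_matrix a IH j(3)
      by (simp add: insert_commute)
    then have c: "CL p ! Suc j = CL' p ! Suc j" by (rule doubleton_cancel)
    have "{AL p ! Suc j, AL p ! ((Suc j + 1) mod L p)} = {AL p ! Suc j, AL' p ! ((Suc j + 1) mod L p)}"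
      using A.col_ones_CL_nth[OF p Suc.prems] B.col_ones_CL_nth[OF p Suc.prems] same_matrix a c
      by simp
    then show ?case using a c by (auto dest: doubleton_cancel)
  qed
  show ?thesis
    using agree A.length_CL[OF p] B.length_CL[OF p] A.length_AL[OF p] B.length_AL[OF p]
    by (auto intro!: nth_equalityI)
qed

lemma partition_on_blockD:
  assumes "partition_on A P" "B \<in> P"
  shows "B \<subseteq> A" "B \<noteq> {}" "finite A \<Longrightarrow> finite B"
  using assms by (auto simp: partition_on_def intro: finite_subset)

lemma partition_on_block_eq:
  "partition_on A P \<Longrightarrow> B \<in> P \<Longrightarrow> B' \<in> P \<Longrightarrow> x \<in> B \<Longrightarrow> x \<in> B' \<Longrightarrow> B = B'"
  unfolding partition_on_def disjoint_def by blast

context linorder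
begin

lemma bij_betw_nth_sorted_key_list_of_set:
  fixes f :: "'b \<Rightarrow> 'a"
  assumes "inj_on f S" "finite S"
  shows "bij_betw (\<lambda>i. sorted_key_list_of_set f S ! (i - 1)) {1..card S} S"
proof -
  interpret folding_insort_key "(\<le>)" "(<)" S f by unfold_locales (rule assms(1))
  let ?l = "sorted_key_list_of_set f S"
  have "set ?l = S" "length ?l = card S" "distinct ?l"
    using assms(2) distinct_if_distinct_map by auto
  then have "bij_betw ((!) ?l) {..<card S} S" by (intro bij_betw_nth) auto
  moreover have "bij_betw (\<lambda>i. i - 1) {1..card S} {..<card S}"
    by (rule bij_betw_byWitness[where f' = Suc]) auto
  ultimately show ?thesis using bij_betw_trans by (fastforce simp: comp_def)
qed

end

lemma bij_betw_blk:
  fixes n :: nat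
  assumes "partition_on {1..n} P"
  shows "bij_betw (blk P k) {1..card {B\<in>P. card B = k}} {B\<in>P. card B = k}"
proof -
  have "Min B \<in> B" if "B \<in> P" for B
    using partition_on_blockD[OF assms that] by simp
  then have "inj_on Min {B\<in>P. card B = k}"
    using partition_on_block_eq[OF assms]
    by (intro inj_onI) (metis (no_types, lifting) mem_Collect_eq)
  moreover have "finite {B\<in>P. card B = k}" using finite_elements[OF _ assms] by simp
  ultimately show ?thesis
    unfolding blk_def[abs_def] by (rule bij_betw_nth_sorted_key_list_of_set)
qed

lemma sum_block_sizes_eq_iff:
  fixes n :: nat
  assumes P: "partition_on {1..n} P"
  shows "(\<Sum>k=2..n. k * card {B\<in>P. card B = k}) = n \<longleftrightarrow> (\<forall>B\<in>P. 2 \<le> card B)"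
proof -
  define Q where "Q = {B\<in>P. card B \<in> {2..n}}"
  have fin: "finite P" using finite_elements[OF _ P] by simp
  have card_B: "1 \<le> card B \<and> card B \<le> n" if "B \<in> P" for B
    using partition_on_blockD[OF P that] card_mono[of "{1..n}" B]
    by (simp add: Suc_le_eq card_gt_0_iff)
  have "(\<Sum>k=2..n. k * card {B\<in>P. card B = k}) = (\<Sum>k=2..n. \<Sum>B\<in>{B\<in>P. card B = k}. card B)"
    by (rule sum.cong) auto
  also have "\<dots> = (\<Sum>B\<in>Q. card B)"
    unfolding Q_def using fin by (subst sum.UNION_disjoint[symmetric]) (auto intro: sum.cong)
  finally have grouped: "(\<Sum>k=2..n. k * card {B\<in>P. card B = k}) = (\<Sum>B\<in>Q. card B)" .
  have "n = (\<Sum>B\<in>P. card B)"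
    using product_partition[OF P] partition_on_blockD(3)[OF P] by simp
  also have "\<dots> = (\<Sum>B\<in>Q. card B) + (\<Sum>B\<in>P - Q. card B)"
    using fin by (simp add: Q_def sum.subset_diff[of Q P] add.commute)
  finally have "(\<Sum>k=2..n. k * card {B\<in>P. card B = k}) = n \<longleftrightarrow> (\<Sum>B\<in>P - Q. card B) = 0"
    using grouped by linarith
  also have "\<dots> \<longleftrightarrow> P - Q = {}"
  proof
    assume "(\<Sum>B\<in>P - Q. card B) = 0"
    then have "\<forall>B\<in>P - Q. card B = 0" using fin by simp
    then show "P - Q = {}" using card_B by fastforce
  qed (simp only: sum.empty)
  also have "\<dots> \<longleftrightarrow> (\<forall>B\<in>P. 2 \<le> card B)"
    using card_B by (auto simp: Q_def)
  finally show ?thesis .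
qed

lemma card_block_mem_if_sum_block_sizes:
  fixes n :: nat
  assumes P: "partition_on {1..n} P" and sum: "(\<Sum>k=2..n. k * card {B\<in>P. card B = k}) = n"
    and B: "B \<in> P"
  shows "card B \<in> {2..n}"
proof -
  have "2 \<le> card B" using sum_block_sizes_eq_iff[OF P] sum B by blast
  moreover have "card B \<le> n" using partition_on_blockD[OF P B] card_mono[of "{1..n}" B] by simp
  ultimately show ?thesis by simp
qed

section \<open>The data \<open>\<Delta>\<close> as normalised cycle families\<close>

definition pairs :: "nat \<Rightarrow> data \<Rightarrow> (nat \<times> nat) set" where
  "pairs n D = {(k, i). k \<in> {2..n} \<and> i \<in> {1..xs D k}}"

definition col_cycle :: "data \<Rightarrow> nat \<times> nat \<Rightarrow> nat list" where
  "col_cycle D = (\<lambda>(k, i). Min (blk (CP D) k i) # cord D k i)"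

definition row_cycle :: "data \<Rightarrow> nat \<times> nat \<Rightarrow> nat list" where
  "row_cycle D = (\<lambda>(k, i). aord D k i)"

lemma UN_UN_eq_UN_pairs: "(\<Union>k\<in>A. \<Union>i\<in>B k. F k i) = (\<Union>(k, i)\<in>{(k, i). k \<in> A \<and> i \<in> B k}. F k i)"
  by blast

lemma Rtrip_eq_cycle_triples:
  "Rtrip n D = cycle_triples (pairs n D) fst (col_cycle D) (row_cycle D)"
  unfolding Rtrip_def cycle_triples_def Let_def UN_UN_eq_UN_pairs pairs_def
  by (rule SUP_cong) (auto simp: col_cycle_def row_cycle_def)

locale Dn_member =
  fixes n :: nat and D :: data
  assumes in_Dn: "D \<in> Dn n"
begin

lemma xs_eq_0: "k \<notin> {2..n} \<Longrightarrow> xs D k = 0"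
  and sum_xs: "(\<Sum>k=2..n. k * xs D k) = n"
  and partition_CP: "partition_on {1..n} (CP D)"
  and partition_AP: "partition_on {1..n} (AP D)"
  and card_CP_blocks: "k \<in> {2..n} \<Longrightarrow> card {B\<in>CP D. card B = k} = xs D k"
  and card_AP_blocks: "k \<in> {2..n} \<Longrightarrow> card {B\<in>AP D. card B = k} = xs D k"
  and rho_permutes: "rho D k permutes {1..xs D k}"
  using in_Dn by (simp_all add: Dn_def)

lemma orderings_cases:
  "if k \<in> {2..n} \<and> i \<in> {1..xs D k}
   then distinct (cord D k i) \<and> set (cord D k i) = blk (CP D) k i - {Min (blk (CP D) k i)} \<and>
     distinct (aord D k i) \<and> set (aord D k i) = blk (AP D) k (rho D k i) \<and>
     aord D k i ! 0 < aord D k i ! 1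
   else cord D k i = [] \<and> aord D k i = []"
  using in_Dn unfolding Dn_def by blast

lemma orderings:
  assumes "k \<in> {2..n}" "i \<in> {1..xs D k}"
  shows "distinct (cord D k i)" "set (cord D k i) = blk (CP D) k i - {Min (blk (CP D) k i)}"
    "distinct (aord D k i)" "set (aord D k i) = blk (AP D) k (rho D k i)"
    "aord D k i ! 0 < aord D k i ! 1"
  using orderings_cases[of k i] assms by auto

lemma orderings_Nil:
  assumes "\<not> (k \<in> {2..n} \<and> i \<in> {1..xs D k})"
  shows "cord D k i = []" "aord D k i = []"
  using orderings_cases[of k i] assms by auto

lemma sum_block_sizes_CP: "(\<Sum>k=2..n. k * card {B\<in>CP D. card B = k}) = n"
  and sum_block_sizes_AP: "(\<Sum>k=2..n. k * card {B\<in>AP D. card B = k}) = n"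
  using sum_xs card_CP_blocks card_AP_blocks by (metis (no_types, lifting) sum.cong)+

lemma card_CP_mem: "B \<in> CP D \<Longrightarrow> card B \<in> {2..n}"
  and card_AP_mem: "B \<in> AP D \<Longrightarrow> card B \<in> {2..n}"
  using card_block_mem_if_sum_block_sizes partition_CP partition_AP
    sum_block_sizes_CP sum_block_sizes_AP by blast+

lemma bij_betw_blk_CP: "k \<in> {2..n} \<Longrightarrow> bij_betw (blk (CP D) k) {1..xs D k} {B\<in>CP D. card B = k}"
  using bij_betw_blk[OF partition_CP, of k] card_CP_blocks by simp

lemma bij_betw_blk_AP: "k \<in> {2..n} \<Longrightarrow> bij_betw (blk (AP D) k) {1..xs D k} {B\<in>AP D. card B = k}"
  using bij_betw_blk[OF partition_AP, of k] card_AP_blocks by simp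

lemma rho_mem: "i \<in> {1..xs D k} \<Longrightarrow> rho D k i \<in> {1..xs D k}"
  using permutes_in_image[OF rho_permutes] by blast

lemma col_cycle_props:
  assumes "(k, i) \<in> pairs n D"
  shows "set (col_cycle D (k, i)) = blk (CP D) k i" "distinct (col_cycle D (k, i))"
    "length (col_cycle D (k, i)) = k" "blk (CP D) k i \<in> CP D"
proof -
  have ki: "k \<in> {2..n}" "i \<in> {1..xs D k}" using assms by (auto simp: pairs_def)
  let ?B = "blk (CP D) k i"
  have B: "?B \<in> CP D" "card ?B = k" using bij_betw_apply[OF bij_betw_blk_CP[OF ki(1)] ki(2)] by auto
  then show "?B \<in> CP D" by simp
  have "Min ?B \<in> ?B" using partition_on_blockD[OF partition_CP B(1)] by simp
  then show set_eq: "set (col_cycle D (k, i)) = ?B" and dist: "distinct (col_cycle D (k, i))"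
    using orderings(1,2)[OF ki] by (auto simp: col_cycle_def)
  show "length (col_cycle D (k, i)) = k" using distinct_card[OF dist] set_eq B(2) by simp
qed

lemma row_cycle_props:
  assumes "(k, i) \<in> pairs n D"
  shows "set (row_cycle D (k, i)) = blk (AP D) k (rho D k i)" "distinct (row_cycle D (k, i))"
    "length (row_cycle D (k, i)) = k" "blk (AP D) k (rho D k i) \<in> AP D"
    "row_cycle D (k, i) ! 0 < row_cycle D (k, i) ! 1"
proof -
  have ki: "k \<in> {2..n}" "i \<in> {1..xs D k}" using assms by (auto simp: pairs_def)
  show set_eq: "set (row_cycle D (k, i)) = blk (AP D) k (rho D k i)"
    and dist: "distinct (row_cycle D (k, i))"
    and "row_cycle D (k, i) ! 0 < row_cycle D (k, i) ! 1"
    using orderings(3-5)[OF ki] by (simp_all add: row_cycle_def)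
  have "blk (AP D) k (rho D k i) \<in> {B\<in>AP D. card B = k}"
    using bij_betw_apply[OF bij_betw_blk_AP[OF ki(1)] rho_mem[OF ki(2)]] .
  then show "length (row_cycle D (k, i)) = k" "blk (AP D) k (rho D k i) \<in> AP D"
    using distinct_card[OF dist] set_eq by auto
qed

lemma pairs_eq_if_blk_CP_eq:
  assumes "(k, i) \<in> pairs n D" "(k', i') \<in> pairs n D" "blk (CP D) k i = blk (CP D) k' i'"
  shows "(k, i) = (k', i')"
proof -
  have "k = k'" using col_cycle_props(1,3)[OF assms(1)] col_cycle_props(1,3)[OF assms(2)] assms(3)
    by (metis distinct_card col_cycle_props(2)[OF assms(1)] col_cycle_props(2)[OF assms(2)])
  moreover have "k \<in> {2..n}" "i \<in> {1..xs D k}" "i' \<in> {1..xs D k}"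
    using assms(1,2) \<open>k = k'\<close> by (auto simp: pairs_def)
  then have "i = i'"
    using inj_onD[OF bij_betw_imp_inj_on[OF bij_betw_blk_CP]] assms(3) \<open>k = k'\<close> by blast
  ultimately show ?thesis by simp
qed

lemma pairs_eq_if_blk_AP_eq:
  assumes "(k, i) \<in> pairs n D" "(k', i') \<in> pairs n D"
    "blk (AP D) k (rho D k i) = blk (AP D) k' (rho D k' i')"
  shows "(k, i) = (k', i')"
proof -
  have "k = k'" using row_cycle_props(1,3)[OF assms(1)] row_cycle_props(1,3)[OF assms(2)] assms(3)
    by (metis distinct_card row_cycle_props(2)[OF assms(1)] row_cycle_props(2)[OF assms(2)])
  moreover have "k \<in> {2..n}" "i \<in> {1..xs D k}" "i' \<in> {1..xs D k}"
    using assms(1,2) \<open>k = k'\<close> by (auto simp: pairs_def)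
  then have "rho D k i = rho D k i'"
    using inj_onD[OF bij_betw_imp_inj_on[OF bij_betw_blk_AP]] rho_mem assms(3) \<open>k = k'\<close> by blast
  then have "i = i'" using permutes_inj[OF rho_permutes] by (auto dest: injD)
  ultimately show ?thesis by simp
qed

lemma CP_eq: "CP D = (\<lambda>p. set (col_cycle D p)) ` pairs n D"
proof
  show "(\<lambda>p. set (col_cycle D p)) ` pairs n D \<subseteq> CP D"
  proof (rule image_subsetI)
    fix p assume "p \<in> pairs n D"
    then show "set (col_cycle D p) \<in> CP D" using col_cycle_props(1,4) by (cases p) simp
  qed
  show "CP D \<subseteq> (\<lambda>p. set (col_cycle D p)) ` pairs n D"
  proof
    fix B assume B: "B \<in> CP D"
    define k where "k = card B"
    have k: "k \<in> {2..n}" using card_CP_mem[OF B] by (simp add: k_def)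
    have "B \<in> blk (CP D) k ` {1..xs D k}"
      using bij_betw_imp_surj_on[OF bij_betw_blk_CP[OF k]] B k_def by simp
    then obtain i where i: "i \<in> {1..xs D k}" "B = blk (CP D) k i" by blast
    then have "(k, i) \<in> pairs n D" using k by (simp add: pairs_def)
    then show "B \<in> (\<lambda>p. set (col_cycle D p)) ` pairs n D"
      using col_cycle_props(1) i(2) by (intro image_eqI) auto
  qed
qed

lemma AP_eq: "AP D = (\<lambda>p. set (row_cycle D p)) ` pairs n D"
proof
  show "(\<lambda>p. set (row_cycle D p)) ` pairs n D \<subseteq> AP D"
  proof (rule image_subsetI)
    fix p assume "p \<in> pairs n D"
    then show "set (row_cycle D p) \<in> AP D" using row_cycle_props(1,4) by (cases p) simp
  qed
  show "AP D \<subseteq> (\<lambda>p. set (row_cycle D p)) ` pairs n D"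
  proof
    fix B assume B: "B \<in> AP D"
    define k where "k = card B"
    have k: "k \<in> {2..n}" using card_AP_mem[OF B] by (simp add: k_def)
    have "B \<in> blk (AP D) k ` rho D k ` {1..xs D k}"
      using bij_betw_imp_surj_on[OF bij_betw_blk_AP[OF k]] permutes_image[OF rho_permutes] B k_def
      by simp
    then obtain i where i: "i \<in> {1..xs D k}" "B = blk (AP D) k (rho D k i)" by blast
    then have "(k, i) \<in> pairs n D" using k by (simp add: pairs_def)
    then show "B \<in> (\<lambda>p. set (row_cycle D p)) ` pairs n D"
      using row_cycle_props(1) i(2) by (intro image_eqI) auto
  qed
qed

lemma cycle_family: "cycle_family n (pairs n D) fst (col_cycle D) (row_cycle D)"
proof
  fix p assume p: "p \<in> pairs n D"
  then obtain k i where ki: "p = (k, i)" "(k, i) \<in> pairs n D" by (cases p) auto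
  show "2 \<le> fst p" using p by (auto simp: pairs_def)
  show "length (col_cycle D p) = fst p" "distinct (col_cycle D p)"
    using col_cycle_props[OF ki(2)] ki(1) by simp_all
  show "length (row_cycle D p) = fst p" "distinct (row_cycle D p)"
    using row_cycle_props[OF ki(2)] ki(1) by simp_all
next
  show "(\<Union>p\<in>pairs n D. set (col_cycle D p)) = {1..n}"
    using partition_CP CP_eq by (simp add: partition_on_def)
  show "(\<Union>p\<in>pairs n D. set (row_cycle D p)) = {1..n}"
    using partition_AP AP_eq by (simp add: partition_on_def)
next
  fix p q x
  assume pq: "p \<in> pairs n D" "q \<in> pairs n D"
  obtain k i k' i' where ki: "p = (k, i)" "q = (k', i')" by (cases p, cases q)
  {
    assume "x \<in> set (col_cycle D p)" "x \<in> set (col_cycle D q)"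
    then have "blk (CP D) k i = blk (CP D) k' i'"
      using partition_on_block_eq[OF partition_CP] col_cycle_props pq ki by metis
    then show "p = q" using pairs_eq_if_blk_CP_eq pq ki by blast
  next
    assume "x \<in> set (row_cycle D p)" "x \<in> set (row_cycle D q)"
    then have "blk (AP D) k (rho D k i) = blk (AP D) k' (rho D k' i')"
      using partition_on_block_eq[OF partition_AP] row_cycle_props pq ki by metis
    then show "p = q" using pairs_eq_if_blk_AP_eq pq ki by blast
  }
qed

lemma Phi_eq_cycle_matrix:
  "Phi n D = triple_matrix n (cycle_triples (pairs n D) fst (col_cycle D) (row_cycle D))"
  by (simp add: Phi_eq_triple_matrix Rtrip_eq_cycle_triples)

lemma CP_eq_column_classes: "CP D = column_classes n (Phi n D)"
  using cycle_family.column_classes_cycle_matrix[OF cycle_family] CP_eq Phi_eq_cycle_matrix by simp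

end

lemma (in Dn_member) data_eqI:
  assumes D': "D' \<in> Dn n" and xs: "xs D' = xs D" and CP: "CP D' = CP D"
    and cycles:
      "\<And>p. p \<in> pairs n D \<Longrightarrow> col_cycle D' p = col_cycle D p \<and> row_cycle D' p = row_cycle D p"
  shows "D' = D"
proof -
  interpret D': Dn_member n D' by (rule Dn_member.intro[OF D'])
  have pairs: "pairs n D' = pairs n D" by (simp add: pairs_def xs)
  have "cord D' k i = cord D k i \<and> aord D' k i = aord D k i" for k i
  proof (cases "(k, i) \<in> pairs n D")
    case True
    then show ?thesis using cycles[OF True] by (simp add: col_cycle_def row_cycle_def)
  next
    case False
    then show ?thesis using orderings_Nil D'.orderings_Nil xs by (simp add: pairs_def)
  qed
  then have cord: "cord D' = cord D" and aord: "aord D' = aord D" by (simp_all add: fun_eq_iff)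
  have AP: "AP D' = AP D"
    using AP_eq D'.AP_eq pairs cycles by (auto simp: image_def)
  have "rho D' k i = rho D k i" for k i
  proof (cases "i \<in> {1..xs D k}")
    case False
    then show ?thesis
      using permutes_not_in[OF rho_permutes] permutes_not_in[OF D'.rho_permutes] xs by simp
  next
    case True
    then have k: "k \<in> {2..n}" using xs_eq_0 by fastforce
    have "(k, i) \<in> pairs n D" using k True by (simp add: pairs_def)
    then have "blk (AP D) k (rho D' k i) = blk (AP D) k (rho D k i)"
      using row_cycle_props(1) D'.row_cycle_props(1) pairs cycles AP by metis
    moreover have "rho D' k i \<in> {1..xs D k}" "rho D k i \<in> {1..xs D k}"
      using D'.rho_mem[of i k] rho_mem[OF True] True xs by simp_all
    ultimately show ?thesis using inj_onD[OF bij_betw_imp_inj_on[OF bij_betw_blk_AP[OF k]]] by blast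
  qed
  then have rho: "rho D' = rho D" by (simp add: fun_eq_iff)
  show ?thesis using xs CP AP rho cord aord by (intro data.equality) simp_all
qed

lemma inj_on_Phi: "inj_on (Phi n) (Dn n)"
proof (rule inj_onI)
  fix D D' assume D: "D \<in> Dn n" and D': "D' \<in> Dn n" and same: "Phi n D = Phi n D'"
  interpret X: Dn_member n D by (rule Dn_member.intro[OF D])
  interpret Y: Dn_member n D' by (rule Dn_member.intro[OF D'])
  have CP: "CP D' = CP D" using X.CP_eq_column_classes Y.CP_eq_column_classes same by simp
  have xs: "xs D' = xs D"
  proof
    fix k show "xs D' k = xs D k"
      using X.card_CP_blocks Y.card_CP_blocks X.xs_eq_0 Y.xs_eq_0 CP by (cases "k \<in> {2..n}") auto
  qed
  have pairs: "pairs n D' = pairs n D" by (simp add: pairs_def xs)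
  have "col_cycle D p = col_cycle D' p \<and> row_cycle D p = row_cycle D' p" if p: "p \<in> pairs n D" for p
  proof (rule cycle_lists_unique[OF X.cycle_family])
    show "cycle_family n (pairs n D) fst (col_cycle D') (row_cycle D')"
      using Y.cycle_family pairs by simp
    show "triple_matrix n (cycle_triples (pairs n D) fst (col_cycle D) (row_cycle D)) =
        triple_matrix n (cycle_triples (pairs n D) fst (col_cycle D') (row_cycle D'))"
      using X.Phi_eq_cycle_matrix Y.Phi_eq_cycle_matrix same pairs by simp
    show "col_cycle D p ! 0 = col_cycle D' p ! 0" using CP by (cases p) (simp add: col_cycle_def)
    show "row_cycle D p ! 0 < row_cycle D p ! 1" "row_cycle D' p ! 0 < row_cycle D' p ! 1"
      using X.row_cycle_props(5) Y.row_cycle_props(5) p pairs by (cases p, auto)+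
  qed (rule p)
  then show "D = D'" using X.data_eqI[OF D' xs CP] by metis
qed

locale normalized_cycle_family = cycle_family n I L CL AL
  for n :: nat and I :: "'i set" and L CL AL +
  assumes CL_first_Min: "p \<in> I \<Longrightarrow> CL p ! 0 = Min (set (CL p))"
    and AL_first_less: "p \<in> I \<Longrightarrow> AL p ! 0 < AL p ! 1"
begin

definition cycle_of :: "nat set \<Rightarrow> 'i" where
  "cycle_of B = (THE p. p \<in> I \<and> set (CL p) = B)"

definition col_blocks :: "nat set set" where
  "col_blocks = (\<lambda>p. set (CL p)) ` I"

definition row_blocks :: "nat set set" where
  "row_blocks = (\<lambda>p. set (AL p)) ` I"

definition row_block :: "nat set \<Rightarrow> nat set" where
  "row_block B = set (AL (cycle_of B))"

lemma cycle_of_set_CL: "p \<in> I \<Longrightarrow> cycle_of (set (CL p)) = p"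
  unfolding cycle_of_def
proof (rule the_equality)
  fix q assume p: "p \<in> I" and q: "q \<in> I \<and> set (CL q) = set (CL p)"
  have "CL p ! 0 \<in> set (CL p)" using two_le_L[OF p] length_CL[OF p] by simp
  then show "q = p" using set_CL_disjoint[of q p "CL p ! 0"] p q by simp
qed simp

lemma card_set_CL: "p \<in> I \<Longrightarrow> card (set (CL p)) = L p"
  and card_set_AL: "p \<in> I \<Longrightarrow> card (set (AL p)) = L p"
  by (simp_all add: distinct_card distinct_CL length_CL distinct_AL length_AL)

lemma partition_col_blocks: "partition_on {1..n} col_blocks"
  and partition_row_blocks: "partition_on {1..n} row_blocks"
proof -
  have nonempty: "set (CL p) \<noteq> {}" "set (AL p) \<noteq> {}" if "p \<in> I" for p
    using card_set_CL[OF that] card_set_AL[OF that] two_le_L[OF that] by auto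
  show "partition_on {1..n} col_blocks"
  proof (rule partition_onI)
    fix B B' assume "B \<in> col_blocks" "B' \<in> col_blocks" "B \<noteq> B'"
    then show "disjnt B B'" using set_CL_disjoint unfolding col_blocks_def disjnt_def by blast
  qed (use UN_set_CL nonempty in \<open>auto simp: col_blocks_def\<close>)
  show "partition_on {1..n} row_blocks"
  proof (rule partition_onI)
    fix B B' assume "B \<in> row_blocks" "B' \<in> row_blocks" "B \<noteq> B'"
    then show "disjnt B B'" using set_AL_disjoint unfolding row_blocks_def disjnt_def by blast
  qed (use UN_set_AL nonempty in \<open>auto simp: row_blocks_def\<close>)
qed

lemma bij_betw_row_block: "bij_betw row_block {B\<in>col_blocks. card B = k} {B\<in>row_blocks. card B = k}"
proof (rule bij_betw_imageI)
  show "inj_on row_block {B\<in>col_blocks. card B = k}"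
  proof (rule inj_onI)
    fix B B' assume "B \<in> {B\<in>col_blocks. card B = k}" "B' \<in> {B\<in>col_blocks. card B = k}"
      and same: "row_block B = row_block B'"
    then obtain p q where pq: "p \<in> I" "q \<in> I" "B = set (CL p)" "B' = set (CL q)"
      by (auto simp: col_blocks_def)
    have "AL p ! 0 \<in> set (AL p)" using two_le_L[OF pq(1)] length_AL[OF pq(1)] by simp
    then have "p = q" using same set_AL_disjoint[OF pq(1,2)]
      by (simp add: row_block_def pq cycle_of_set_CL)
    then show "B = B'" using pq by simp
  qed
  show "row_block ` {B\<in>col_blocks. card B = k} = {B\<in>row_blocks. card B = k}"
  proof (intro equalityI subsetI)
    fix B' assume "B' \<in> row_block ` {B\<in>col_blocks. card B = k}"
    then obtain p where "p \<in> I" "card (set (CL p)) = k" "B' = row_block (set (CL p))"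
      by (auto simp: col_blocks_def)
    then show "B' \<in> {B\<in>row_blocks. card B = k}"
      using card_set_CL card_set_AL by (simp add: row_blocks_def row_block_def cycle_of_set_CL)
  next
    fix B' assume "B' \<in> {B\<in>row_blocks. card B = k}"
    then obtain p where p: "p \<in> I" "B' = set (AL p)" "card B' = k" by (auto simp: row_blocks_def)
    then have "set (CL p) \<in> {B\<in>col_blocks. card B = k}" "B' = row_block (set (CL p))"
      using card_set_CL card_set_AL by (simp_all add: col_blocks_def row_block_def cycle_of_set_CL)
    then show "B' \<in> row_block ` {B\<in>col_blocks. card B = k}" by (rule rev_image_eqI)
  qed
qed

definition xs\<^sub>0 :: "nat \<Rightarrow> nat" where
  "xs\<^sub>0 k = (if k \<in> {2..n} then card {B\<in>col_blocks. card B = k} else 0)"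

text \<open>\<open>\<rho>\<^sub>k\<close> sends \<open>i\<close> to the index of the \<open>A\<close>-block of size \<open>k\<close> that lies on the same cycle as
  the \<open>i\<close>-th \<open>C\<close>-block of size \<open>k\<close>.\<close>
definition rho\<^sub>0 :: "nat \<Rightarrow> nat \<Rightarrow> nat" where
  "rho\<^sub>0 k i = (if i \<in> {1..xs\<^sub>0 k}
     then inv_into {1..xs\<^sub>0 k} (blk row_blocks k) (row_block (blk col_blocks k i)) else i)"

definition cord\<^sub>0 :: "nat \<Rightarrow> nat \<Rightarrow> nat list" where
  "cord\<^sub>0 k i =
     (if k \<in> {2..n} \<and> i \<in> {1..xs\<^sub>0 k} then tl (CL (cycle_of (blk col_blocks k i))) else [])"

definition aord\<^sub>0 :: "nat \<Rightarrow> nat \<Rightarrow> nat list" where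
  "aord\<^sub>0 k i = (if k \<in> {2..n} \<and> i \<in> {1..xs\<^sub>0 k} then AL (cycle_of (blk col_blocks k i)) else [])"

definition datum :: data where
  "datum = \<lparr>xs = xs\<^sub>0, CP = col_blocks, AP = row_blocks, rho = rho\<^sub>0, cord = cord\<^sub>0, aord = aord\<^sub>0\<rparr>"

lemma card_col_block_mem: "B \<in> col_blocks \<Longrightarrow> card B \<in> {2..n}"
proof -
  assume "B \<in> col_blocks"
  then obtain p where p: "p \<in> I" "B = set (CL p)" by (auto simp: col_blocks_def)
  have "set (CL p) \<subseteq> {1..n}" using UN_set_CL p(1) by blast
  then have "card B \<le> n" using card_mono[of "{1..n}" B] p(2) by simp
  then show ?thesis using p card_set_CL two_le_L by simp
qed

lemma bij_betw_blk_col_blocks: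
  "k \<in> {2..n} \<Longrightarrow> bij_betw (blk col_blocks k) {1..xs\<^sub>0 k} {B\<in>col_blocks. card B = k}"
  using bij_betw_blk[OF partition_col_blocks, of k] by (simp add: xs\<^sub>0_def)

lemma bij_betw_blk_row_blocks:
  "k \<in> {2..n} \<Longrightarrow> bij_betw (blk row_blocks k) {1..xs\<^sub>0 k} {B\<in>row_blocks. card B = k}"
  using bij_betw_blk[OF partition_row_blocks, of k] bij_betw_same_card[OF bij_betw_row_block, of k]
  by (simp add: xs\<^sub>0_def)

lemma cycle_of_blk:
  assumes "k \<in> {2..n}" "i \<in> {1..xs\<^sub>0 k}"
  defines "p \<equiv> cycle_of (blk col_blocks k i)"
  shows "p \<in> I" "set (CL p) = blk col_blocks k i" "L p = k"
    "blk row_blocks k (rho\<^sub>0 k i) = set (AL p)"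
proof -
  have B: "blk col_blocks k i \<in> col_blocks" "card (blk col_blocks k i) = k"
    using bij_betw_apply[OF bij_betw_blk_col_blocks[OF assms(1)] assms(2)] by auto
  then obtain q where q: "q \<in> I" "blk col_blocks k i = set (CL q)" by (auto simp: col_blocks_def)
  then have pI: "p \<in> I" and set_p: "set (CL p) = blk col_blocks k i"
    by (simp_all add: p_def cycle_of_set_CL)
  then show "p \<in> I" "set (CL p) = blk col_blocks k i" by simp_all
  show "L p = k" using card_set_CL[OF pI] set_p B(2) by simp
  have "row_block (blk col_blocks k i) \<in> blk row_blocks k ` {1..xs\<^sub>0 k}"
    using bij_betw_apply[OF bij_betw_row_block] B
      bij_betw_imp_surj_on[OF bij_betw_blk_row_blocks[OF assms(1)]] by simp
  then show "blk row_blocks k (rho\<^sub>0 k i) = set (AL p)"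
    using assms(2) f_inv_into_f by (simp add: rho\<^sub>0_def row_block_def p_def)
qed

lemma rho\<^sub>0_permutes: "rho\<^sub>0 k permutes {1..xs\<^sub>0 k}"
proof (cases "k \<in> {2..n}")
  case False
  then have "xs\<^sub>0 k = 0" by (auto simp: xs\<^sub>0_def)
  then have "rho\<^sub>0 k = id" by (simp add: rho\<^sub>0_def fun_eq_iff)
  then show ?thesis using \<open>xs\<^sub>0 k = 0\<close> by (simp add: permutes_id)
next
  case True
  have "bij_betw (inv_into {1..xs\<^sub>0 k} (blk row_blocks k) \<circ> row_block \<circ> blk col_blocks k)
      {1..xs\<^sub>0 k} {1..xs\<^sub>0 k}"
    using bij_betw_trans[OF bij_betw_trans[OF bij_betw_blk_col_blocks[OF True] bij_betw_row_block]
        bij_betw_inv_into[OF bij_betw_blk_row_blocks[OF True]]]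
    by (simp add: comp_assoc)
  then have "bij_betw (rho\<^sub>0 k) {1..xs\<^sub>0 k} {1..xs\<^sub>0 k}"
    by (rule bij_betw_cong[THEN iffD1, rotated]) (simp add: rho\<^sub>0_def)
  then show ?thesis by (rule bij_imp_permutes) (auto simp: rho\<^sub>0_def)
qed

lemma datum_in_Dn: "datum \<in> Dn n"
proof -
  have sum: "(\<Sum>k=2..n. k * xs\<^sub>0 k) = n"
  proof -
    have "(\<Sum>k=2..n. k * xs\<^sub>0 k) = (\<Sum>k=2..n. k * card {B\<in>col_blocks. card B = k})"
      by (rule sum.cong) (simp_all add: xs\<^sub>0_def)
    also have "\<dots> = n"
      using sum_block_sizes_eq_iff[OF partition_col_blocks] card_col_block_mem by simp
    finally show ?thesis .
  qed
  have orderings: "distinct (cord\<^sub>0 k i) \<and>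
      set (cord\<^sub>0 k i) = blk col_blocks k i - {Min (blk col_blocks k i)} \<and>
      distinct (aord\<^sub>0 k i) \<and> set (aord\<^sub>0 k i) = blk row_blocks k (rho\<^sub>0 k i) \<and>
      aord\<^sub>0 k i ! 0 < aord\<^sub>0 k i ! 1"
    if ki: "k \<in> {2..n}" "i \<in> {1..xs\<^sub>0 k}" for k i
  proof -
    define p where "p = cycle_of (blk col_blocks k i)"
    note p = cycle_of_blk[OF ki, folded p_def]
    have "CL p = Min (set (CL p)) # tl (CL p)"
      using CL_first_Min[OF p(1)] length_CL[OF p(1)] two_le_L[OF p(1)] by (cases "CL p") auto
    then have "distinct (tl (CL p))" "set (tl (CL p)) = set (CL p) - {Min (set (CL p))}"
      using distinct_CL[OF p(1)] by (metis distinct.simps(2) list.set(2) Diff_insert_absorb)+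
    then show ?thesis
      using ki p distinct_AL AL_first_less by (simp add: cord\<^sub>0_def aord\<^sub>0_def p_def)
  qed
  show ?thesis
    unfolding Dn_def datum_def
    using sum partition_col_blocks partition_row_blocks bij_betw_same_card[OF bij_betw_row_block]
      rho\<^sub>0_permutes orderings
    by (auto simp: xs\<^sub>0_def cord\<^sub>0_def aord\<^sub>0_def)
qed

lemma Phi_datum: "Phi n datum = M"
proof -
  let ?h = "\<lambda>(k, i). cycle_of (blk col_blocks k i)"
  have pairs: "pairs n datum = {(k, i). k \<in> {2..n} \<and> i \<in> {1..xs\<^sub>0 k}}"
    by (simp add: pairs_def datum_def)
  have cycles: "fst q = L (?h q) \<and> col_cycle datum q = CL (?h q) \<and> row_cycle datum q = AL (?h q)"
    if "q \<in> pairs n datum" for q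
  proof -
    obtain k i where "q = (k, i)" by (cases q)
    then have ki: "q = (k, i)" "k \<in> {2..n}" "i \<in> {1..xs\<^sub>0 k}" using that pairs by auto
    note p = cycle_of_blk[OF ki(2,3)]
    have "CL (?h q) = Min (blk col_blocks k i) # tl (CL (?h q))"
      using ki(1) p CL_first_Min[OF p(1)] length_CL[OF p(1)] two_le_L[OF p(1)]
      by (cases "CL (?h q)") auto
    then show ?thesis
      using ki p by (simp add: col_cycle_def row_cycle_def datum_def cord\<^sub>0_def aord\<^sub>0_def)
  qed
  have "?h ` pairs n datum = I"
  proof
    show "?h ` pairs n datum \<subseteq> I" using cycle_of_blk(1) pairs by auto
    show "I \<subseteq> ?h ` pairs n datum"
    proof
      fix p assume p: "p \<in> I"
      define k where "k = L p"
      have "set (CL p) \<in> col_blocks" by (simp add: col_blocks_def p)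
      then have k: "k \<in> {2..n}" using card_col_block_mem card_set_CL[OF p] k_def by metis
      have "set (CL p) \<in> blk col_blocks k ` {1..xs\<^sub>0 k}"
        using bij_betw_imp_surj_on[OF bij_betw_blk_col_blocks[OF k]] p card_set_CL
        by (simp add: col_blocks_def k_def)
      then obtain i where i: "i \<in> {1..xs\<^sub>0 k}" "set (CL p) = blk col_blocks k i" by blast
      then have "p = ?h (k, i)" using cycle_of_set_CL[OF p] by simp
      moreover have "(k, i) \<in> pairs n datum" using pairs k i by simp
      ultimately show "p \<in> ?h ` pairs n datum" by blast
    qed
  qed
  moreover have "cycle_triples (pairs n datum) fst (col_cycle datum) (row_cycle datum) =
      cycle_triples (?h ` pairs n datum) L CL AL"
    by (rule cycle_triples_reindex) (rule cycles)
  ultimately show ?thesis unfolding Phi_eq_triple_matrix Rtrip_eq_cycle_triples by simp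
qed

end

section \<open>Walking along the cycles of a \<open>\<Lambda>\<^sub>n\<^sup>2\<close>-matrix\<close>

locale Lambda2_matrix =
  fixes n :: nat and M :: "nat \<Rightarrow> nat \<Rightarrow> nat"
  assumes in_Lambda2: "M \<in> Lambda2 n"
begin

lemma binary_matrix_M: "binary_matrix n M"
  and card_row_ones: "r \<in> {1..n} \<Longrightarrow> card (row_ones n M r) = 2"
  and card_col_ones: "c \<in> {1..n} \<Longrightarrow> card (col_ones n M c) = 2"
  using in_Lambda2 by (simp_all add: Lambda2_iff)

lemma col_ones_subset: "col_ones n M c \<subseteq> {1..n}"
  by (auto simp: col_ones_def)

definition ones :: "(nat \<times> nat) set" where
  "ones = {(c, r). c \<in> {1..n} \<and> r \<in> col_ones n M c}"

text \<open>A position \<open>(c, r)\<close> is a column together with the row through which the walk entered it;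
  the walk leaves \<open>c\<close> through its other row \<open>r'\<close> and moves on to the other column of \<open>r'\<close>.\<close>
definition next_pos :: "nat \<times> nat \<Rightarrow> nat \<times> nat" where
  "next_pos = (\<lambda>(c, r). let r' = other (col_ones n M c) r in (other (row_ones n M r') c, r'))"

lemma finite_ones: "finite ones"
  by (rule finite_subset[of _ "{1..n} \<times> {1..n}"]) (auto simp: ones_def col_ones_def)

lemma next_pos_props:
  assumes "(c, r) \<in> ones"
  defines "r' \<equiv> other (col_ones n M c) r"
  defines "c' \<equiv> other (row_ones n M r') c"
  shows "r' \<in> col_ones n M c" "r' \<noteq> r" "c' \<in> row_ones n M r'" "c' \<noteq> c"
    "next_pos (c, r) = (c', r')" "next_pos (c, r) \<in> ones"
proof -
  have c: "c \<in> {1..n}" and r: "r \<in> col_ones n M c" using assms(1) by (auto simp: ones_def)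
  show r': "r' \<in> col_ones n M c" "r' \<noteq> r"
    using other_mem[OF card_col_ones[OF c] r] unfolding r'_def by auto
  then have r'_n: "r' \<in> {1..n}" by (simp add: col_ones_def)
  then have "c \<in> row_ones n M r'" using mem_row_ones_iff_mem_col_ones[OF _ c] r' by blast
  then show c': "c' \<in> row_ones n M r'" "c' \<noteq> c"
    using other_mem[OF card_row_ones[OF r'_n]] unfolding c'_def by auto
  show "next_pos (c, r) = (c', r')" by (simp add: next_pos_def Let_def r'_def c'_def)
  have "c' \<in> {1..n}" using c' by (simp add: row_ones_def)
  then have "r' \<in> col_ones n M c'" using mem_row_ones_iff_mem_col_ones[OF r'_n] c' by blast
  then show "next_pos (c, r) \<in> ones"
    using \<open>c' \<in> {1..n}\<close> \<open>next_pos (c, r) = (c', r')\<close> by (simp add: ones_def)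
qed

lemma next_pos_mem: "x \<in> ones \<Longrightarrow> next_pos x \<in> ones"
  using next_pos_props(6) by (cases x) blast

lemma inj_on_next_pos: "inj_on next_pos ones"
proof (rule inj_onI)
  fix x y assume x: "x \<in> ones" and y: "y \<in> ones" and same: "next_pos x = next_pos y"
  obtain c r c' r' where cr: "x = (c, r)" "y = (c', r')" by (cases x, cases y)
  note X = next_pos_props[OF x[unfolded cr(1)]] and Y = next_pos_props[OF y[unfolded cr(2)]]
  have c: "c \<in> {1..n}" "r \<in> col_ones n M c" and c': "c' \<in> {1..n}" "r' \<in> col_ones n M c'"
    using x y cr by (auto simp: ones_def)
  define s where "s = other (col_ones n M c) r"
  have s: "other (col_ones n M c') r' = s" using same X(5) Y(5) cr by (simp add: s_def)
  have s_n: "s \<in> {1..n}" using X(1) by (simp add: s_def col_ones_def)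
  have "c \<in> row_ones n M s" using mem_row_ones_iff_mem_col_ones[OF s_n c(1)] X(1)
    by (simp add: s_def)
  moreover have "c' \<in> row_ones n M s" using mem_row_ones_iff_mem_col_ones[OF s_n c'(1)] Y(1) s
    by simp
  moreover have "other (row_ones n M s) c = other (row_ones n M s) c'"
    using same X(5) Y(5) cr s by (simp add: s_def)
  ultimately have "c = c'" by (rule other_inj[OF card_row_ones[OF s_n]])
  have "r' \<in> col_ones n M c" using c'(2) \<open>c = c'\<close> by simp
  moreover have "other (col_ones n M c) r = other (col_ones n M c) r'" using s \<open>c = c'\<close>
    by (simp add: s_def)
  ultimately have "r = r'" by (rule other_inj[OF card_col_ones[OF c(1)] c(2)])
  then show "x = y" using cr \<open>c = c'\<close> by simp
qed

end

locale Lambda2_walk = Lambda2_matrix +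
  fixes c\<^sub>0 r\<^sub>0 :: nat
  assumes start: "(c\<^sub>0, r\<^sub>0) \<in> ones"
begin

definition pos :: "nat \<Rightarrow> nat \<times> nat" where
  "pos j = (next_pos ^^ j) (c\<^sub>0, r\<^sub>0)"

definition period :: nat where
  "period = (LEAST p. 0 < p \<and> pos p = (c\<^sub>0, r\<^sub>0))"

abbreviation col_at :: "nat \<Rightarrow> nat" where
  "col_at j \<equiv> fst (pos j)"

abbreviation row_at :: "nat \<Rightarrow> nat" where
  "row_at j \<equiv> snd (pos j)"

lemma pos_0: "pos 0 = (c\<^sub>0, r\<^sub>0)"
  by (simp add: pos_def)

lemma pos_Suc: "pos (Suc j) = next_pos (pos j)"
  by (simp add: pos_def)

lemma pos_mem: "pos j \<in> ones"
  unfolding pos_def using funpow_mem[OF _ start] next_pos_mem by blast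

lemma walk_step:
  "row_at (Suc j) \<in> col_ones n M (col_at j)" "row_at (Suc j) \<noteq> row_at j"
  "col_at (Suc j) \<in> row_ones n M (row_at (Suc j))" "col_at (Suc j) \<noteq> col_at j"
  using next_pos_props(1-5)[of "col_at j" "row_at j"] pos_mem[of j] by (simp_all add: pos_Suc)

lemma col_ones_col_at: "col_ones n M (col_at j) = {row_at j, row_at (Suc j)}"
proof -
  have "col_at j \<in> {1..n}" "row_at j \<in> col_ones n M (col_at j)"
    using pos_mem[of j] by (auto simp: ones_def)
  then show ?thesis
    using card_2_eqI[OF card_col_ones] walk_step(1,2) by metis
qed

lemma row_ones_row_at: "row_ones n M (row_at (Suc j)) = {col_at j, col_at (Suc j)}"
proof -
  have "row_at (Suc j) \<in> {1..n}" "col_at j \<in> {1..n}" using pos_mem[of j] walk_step(1)[of j]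
    by (auto simp: ones_def col_ones_def)
  then have "col_at j \<in> row_ones n M (row_at (Suc j))"
    using mem_row_ones_iff_mem_col_ones walk_step(1) by blast
  then show ?thesis
    using card_2_eqI[OF card_row_ones] walk_step(3,4) \<open>row_at (Suc j) \<in> {1..n}\<close> by metis
qed

lemma period: "0 < period" "pos period = (c\<^sub>0, r\<^sub>0)"
proof -
  have "\<exists>p>0. pos p = (c\<^sub>0, r\<^sub>0)"
    unfolding pos_def
    using funpow_period_exists[OF finite_ones inj_on_next_pos _ start] next_pos_mem by blast
  from LeastI_ex[OF this] show "0 < period" "pos period = (c\<^sub>0, r\<^sub>0)"
    by (simp_all add: period_def)
qed

lemma pos_mod_period: "pos (j mod period) = pos j"
  using funpow_mod_eq[OF period(2)[unfolded pos_def]] by (simp add: pos_def)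

lemma inj_on_pos: "inj_on pos {0..<period}"
  unfolding pos_def
proof (rule inj_on_funpow_least)
  show "(next_pos ^^ period) (c\<^sub>0, r\<^sub>0) = (c\<^sub>0, r\<^sub>0)" using period(2) by (simp add: pos_def)
  show "(next_pos ^^ m) (c\<^sub>0, r\<^sub>0) \<noteq> (c\<^sub>0, r\<^sub>0)" if "0 < m" "m < period" for m
    using not_less_Least[of m "\<lambda>p. 0 < p \<and> pos p = (c\<^sub>0, r\<^sub>0)"] that
    by (simp add: period_def pos_def)
qed

lemma two_le_period: "2 \<le> period"
proof (rule ccontr)
  assume "\<not> 2 \<le> period"
  then have "period = 1" using period(1) by simp
  then have "pos 1 = pos 0" using period(2) pos_0 by simp
  then show False using walk_step(2)[of 0] by simp
qed

text \<open>A walk that never immediately backtracks cannot retrace itself in the opposite direction: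
  shrinking such a retraced segment from both ends would end in an immediate backtrack.\<close>
lemma no_reversal: "col_at i = col_at (i + d) \<Longrightarrow> row_at (i + d) = row_at (Suc i) \<Longrightarrow> False"
proof (induction d arbitrary: i rule: less_induct)
  case (less d)
  consider "d = 0" | "d = 1" | e where "d = Suc (Suc e)" by (metis One_nat_def not0_implies_Suc)
  then show ?case
  proof cases
    case 1
    then show False using less.prems(2) walk_step(2)[of i] by simp
  next
    case 2
    then show False using less.prems(1) walk_step(4)[of i] by simp
  next
    case (3 e)
    have "{col_at i, col_at (Suc i + e)} = {col_at i, col_at (Suc i)}"
      using row_ones_row_at[of "Suc i + e"] row_ones_row_at[of i] less.prems 3
      by (simp add: insert_commute)
    then have c: "col_at (Suc i) = col_at (Suc i + e)" by (rule doubleton_cancel[symmetric])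
    have "{row_at (Suc i), row_at (Suc i + e)} = {row_at (Suc i), row_at (Suc (Suc i))}"
      using col_ones_col_at[of "Suc i + e"] col_ones_col_at[of "Suc i"] less.prems 3 c
      by (simp add: insert_commute)
    then have "row_at (Suc i + e) = row_at (Suc (Suc i))" by (rule doubleton_cancel)
    then show False using less.IH[of e "Suc i"] 3 c by simp
  qed
qed

lemma col_at_neq: "i < j \<Longrightarrow> j < period \<Longrightarrow> col_at i \<noteq> col_at j"
proof
  assume ij: "i < j" "j < period" and same: "col_at i = col_at j"
  have "pos i \<noteq> pos j" using inj_on_pos ij by (auto dest: inj_onD)
  then have "row_at j \<noteq> row_at i" using same by (simp add: prod_eq_iff)
  moreover have "row_at j \<in> col_ones n M (col_at i)" using col_ones_col_at[of j] same by simp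
  then have "row_at j \<in> {row_at i, row_at (Suc i)}" using col_ones_col_at[of i] by simp
  ultimately have "row_at (i + (j - i)) = row_at (Suc i)" using ij(1) by simp
  then show False using no_reversal[of i "j - i"] same ij(1) by simp
qed

lemma row_at_Suc_neq: "i < j \<Longrightarrow> j < period \<Longrightarrow> row_at (Suc i) \<noteq> row_at (Suc j)"
proof
  assume ij: "i < j" "j < period" and same: "row_at (Suc i) = row_at (Suc j)"
  have "{col_at i, col_at (Suc i)} = {col_at j, col_at (Suc j)}"
    using row_ones_row_at[of i] row_ones_row_at[of j] same by simp
  moreover have "col_at i \<noteq> col_at j" using col_at_neq ij by simp
  ultimately have cross: "col_at i = col_at (Suc j)" "col_at (Suc i) = col_at j"
    by (auto simp: doubleton_eq_iff)
  have "Suc j = period"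
    using col_at_neq[of i "Suc j"] cross(1) ij by (cases "Suc j < period") auto
  then have "col_at i = col_at 0" using cross(1) period(2) pos_0 by simp
  then have "i = 0" using col_at_neq[of 0 i] ij by (cases "i = 0") auto
  then have "j = 1" using col_at_neq[of 1 j] cross(2) ij by (cases "j = 1") auto
  then have "row_at 1 = row_at 0" using same \<open>i = 0\<close> \<open>Suc j = period\<close> period(2) pos_0 by simp
  then show False using walk_step(2)[of 0] by simp
qed

lemma row_at_neq: "i < j \<Longrightarrow> j < period \<Longrightarrow> row_at i \<noteq> row_at j"
proof (cases i)
  case 0
  assume ij: "i < j" "j < period"
  have "row_at (Suc (j - 1)) \<noteq> row_at (Suc (period - 1))"
    using row_at_Suc_neq[of "j - 1" "period - 1"] ij by simp
  then show ?thesis using 0 ij period(2) pos_0 by simp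
next
  case (Suc i')
  assume ij: "i < j" "j < period"
  then obtain j' where "j = Suc j'" by (cases j) auto
  then show ?thesis using row_at_Suc_neq[of i' j'] ij Suc by simp
qed

definition walk_cols :: "nat list" where
  "walk_cols = map col_at [0..<period]"

definition walk_rows :: "nat list" where
  "walk_rows = map row_at [0..<period]"

lemma length_walk: "length walk_cols = period" "length walk_rows = period"
  by (simp_all add: walk_cols_def walk_rows_def)

lemma nth_walk: "j < period \<Longrightarrow> walk_cols ! j = col_at j" "j < period \<Longrightarrow> walk_rows ! j = row_at j"
  by (simp_all add: walk_cols_def walk_rows_def)

lemma distinct_walk: "distinct walk_cols" "distinct walk_rows"
  unfolding distinct_conv_nth length_walk
  by (metis nth_walk col_at_neq linorder_neqE_nat, metis nth_walk row_at_neq linorder_neqE_nat)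

lemma mem_walk: "col_at j \<in> set walk_cols" "row_at j \<in> set walk_rows"
proof -
  have "j mod period < period" using period(1) by simp
  then show "col_at j \<in> set walk_cols" "row_at j \<in> set walk_rows"
    using nth_walk length_walk pos_mod_period[of j] by (metis nth_mem)+
qed

lemma col_ones_walk_cols: "j < period \<Longrightarrow>
    col_ones n M (walk_cols ! j) = {walk_rows ! j, walk_rows ! ((j + 1) mod period)}"
  using col_ones_col_at[of j] pos_mod_period[of "Suc j"] period(1) by (simp add: nth_walk)

lemma col_ones_subset_walk_rows: "c \<in> set walk_cols \<Longrightarrow> col_ones n M c \<subseteq> set walk_rows"
  using col_ones_col_at mem_walk by (auto simp: walk_cols_def)

lemma row_ones_subset_walk_cols: "r \<in> set walk_rows \<Longrightarrow> row_ones n M r \<subseteq> set walk_cols"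
proof -
  assume "r \<in> set walk_rows"
  then obtain j where j: "r = row_at j" by (auto simp: walk_rows_def)
  have "row_at j = row_at (Suc (j + period - 1))"
    using pos_mod_period[of j] pos_mod_period[of "j + period"] period(1) by simp
  then show ?thesis using j row_ones_row_at mem_walk by simp
qed

lemma set_walk_cols: "set walk_cols = column_class n M c\<^sub>0"
proof
  have "(c\<^sub>0, col_at j) \<in> (column_adj n M)\<^sup>*" for j
  proof (induction j)
    case 0
    then show ?case using pos_0 by simp
  next
    case (Suc j)
    have "col_at j \<in> {1..n}" "col_at (Suc j) \<in> {1..n}"
      using pos_mem[of j] pos_mem[of "Suc j"] by (auto simp: ones_def)
    moreover have "row_at (Suc j) \<in> col_ones n M (col_at j) \<inter> col_ones n M (col_at (Suc j))"
      using col_ones_col_at[of j] col_ones_col_at[of "Suc j"] by simp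
    ultimately have "(col_at j, col_at (Suc j)) \<in> column_adj n M"
      unfolding column_adj_iff by blast
    then show ?case by (rule rtrancl_into_rtrancl[OF Suc.IH])
  qed
  then show "set walk_cols \<subseteq> column_class n M c\<^sub>0"
    by (auto simp: walk_cols_def column_class_def)
  show "column_class n M c\<^sub>0 \<subseteq> set walk_cols"
  proof
    fix c assume "c \<in> column_class n M c\<^sub>0"
    then have "(c\<^sub>0, c) \<in> (column_adj n M)\<^sup>*" by (simp add: column_class_def)
    then show "c \<in> set walk_cols"
    proof (induction rule: rtrancl_induct)
      case base
      then show ?case using mem_walk(1)[of 0] pos_0 by simp
    next
      case (step c c')
      then obtain r where r: "r \<in> col_ones n M c" "r \<in> col_ones n M c'" "c' \<in> {1..n}"
        by (auto simp: column_adj_iff)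
      then have "r \<in> set walk_rows" "r \<in> {1..n}"
        using col_ones_subset_walk_rows[OF step.IH] by (auto simp: col_ones_def)
      moreover have "c' \<in> row_ones n M r"
        using mem_row_ones_iff_mem_col_ones[OF \<open>r \<in> {1..n}\<close> r(3)] r(2) by simp
      ultimately show ?case using row_ones_subset_walk_cols by blast
    qed
  qed
qed

lemma walk_first:
  "walk_cols ! 0 = c\<^sub>0" "walk_rows ! 0 = r\<^sub>0" "walk_rows ! 1 = other (col_ones n M c\<^sub>0) r\<^sub>0"
  using nth_walk period(1) two_le_period pos_0 pos_Suc[of 0] start
  by (auto simp: next_pos_def Let_def)

end

context Lambda2_matrix
begin

definition class_start_row :: "nat set \<Rightarrow> nat" where
  "class_start_row B = Min (col_ones n M (Min B))"

definition class_cols :: "nat set \<Rightarrow> nat list" where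
  "class_cols B = Lambda2_walk.walk_cols n M (Min B) (class_start_row B)"

definition class_rows :: "nat set \<Rightarrow> nat list" where
  "class_rows B = Lambda2_walk.walk_rows n M (Min B) (class_start_row B)"

lemma class_walk:
  assumes "B \<in> column_classes n M"
  shows "Lambda2_walk n M (Min B) (class_start_row B)" "column_class n M (Min B) = B"
proof -
  obtain c where c: "c \<in> {1..n}" "B = column_class n M c" using assms
    by (auto simp: column_classes_def)
  have B: "B \<subseteq> {1..n}" "B \<noteq> {}"
    using partition_on_blockD[OF partition_on_column_classes assms] by simp_all
  then have min_B: "Min B \<in> B" using finite_subset[of B "{1..n}"] by simp
  then have "Min B \<in> {1..n}" by (rule subsetD[OF B(1)])
  show "column_class n M (Min B) = B" using column_class_eq_if_mem[of "Min B" n M c] min_B c(2)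
    by simp
  have "card (col_ones n M (Min B)) = 2" using card_col_ones[OF \<open>Min B \<in> {1..n}\<close>] .
  then have "class_start_row B \<in> col_ones n M (Min B)"
    unfolding class_start_row_def by (intro Min_in) (auto intro: card_ge_0_finite)
  then show "Lambda2_walk n M (Min B) (class_start_row B)"
    using in_Lambda2 \<open>Min B \<in> {1..n}\<close>
    by unfold_locales (simp_all add: ones_def)
qed

lemma class_walk_props:
  assumes B: "B \<in> column_classes n M"
  shows "set (class_cols B) = B" "length (class_cols B) = card B" "length (class_rows B) = card B"
    "distinct (class_cols B)" "distinct (class_rows B)" "2 \<le> card B"
    "class_cols B ! 0 = Min B" "class_rows B ! 0 < class_rows B ! 1"
    "\<And>j. j < card B \<Longrightarrow>
      col_ones n M (class_cols B ! j) = {class_rows B ! j, class_rows B ! ((j + 1) mod card B)}"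
    "\<And>c. c \<in> B \<Longrightarrow> col_ones n M c \<subseteq> set (class_rows B)"
    "\<And>r. r \<in> set (class_rows B) \<Longrightarrow> row_ones n M r \<subseteq> B"
proof -
  interpret W: Lambda2_walk n M "Min B" "class_start_row B" by (rule class_walk(1)[OF B])
  note defs = class_cols_def class_rows_def
  show set_eq: "set (class_cols B) = B" using W.set_walk_cols class_walk(2)[OF B]
    by (simp add: defs)
  have period: "W.period = card B" using distinct_card[OF W.distinct_walk(1)] W.length_walk set_eq
    by (simp add: defs)
  show "length (class_cols B) = card B" "length (class_rows B) = card B"
    "distinct (class_cols B)" "distinct (class_rows B)" "2 \<le> card B"
    using W.length_walk W.distinct_walk W.two_le_period period by (simp_all add: defs)
  show "class_cols B ! 0 = Min B" using W.walk_first by (simp add: defs)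
  have r\<^sub>0: "class_start_row B \<in> col_ones n M (Min B)" and "Min B \<in> {1..n}"
    using W.start by (simp_all add: ones_def)
  then have "class_start_row B \<le> other (col_ones n M (Min B)) (class_start_row B)"
    using other_mem(1)[OF card_col_ones r\<^sub>0] finite_subset[OF col_ones_subset]
    unfolding class_start_row_def by simp
  then show "class_rows B ! 0 < class_rows B ! 1"
    using W.walk_first other_mem(2)[OF card_col_ones[OF \<open>Min B \<in> {1..n}\<close>] r\<^sub>0]
    by (simp add: defs)
  show "col_ones n M (class_cols B ! j) = {class_rows B ! j, class_rows B ! ((j + 1) mod card B)}"
    if "j < card B" for j
    using W.col_ones_walk_cols that period by (simp add: defs)
  show "col_ones n M c \<subseteq> set (class_rows B)" if "c \<in> B" for c
    using W.col_ones_subset_walk_rows that set_eq by (simp add: defs)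
  show "row_ones n M r \<subseteq> B" if "r \<in> set (class_rows B)" for r
    using W.row_ones_subset_walk_cols that set_eq by (simp add: defs)
qed

lemma normalized_cycle_family_classes:
  "normalized_cycle_family n (column_classes n M) card class_cols class_rows"
proof unfold_locales
  fix B assume "B \<in> column_classes n M"
  note props = class_walk_props[OF this]
  show "2 \<le> card B" "length (class_cols B) = card B" "length (class_rows B) = card B"
    "distinct (class_cols B)" "distinct (class_rows B)" "class_rows B ! 0 < class_rows B ! 1"
    using props by simp_all
  show "class_cols B ! 0 = Min (set (class_cols B))" using props(1,7) by simp
next
  show "(\<Union>B\<in>column_classes n M. set (class_cols B)) = {1..n}"
    using class_walk_props(1) partition_onD1[OF partition_on_column_classes] by simp
  show "(\<Union>B\<in>column_classes n M. set (class_rows B)) = {1..n}"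
  proof (intro equalityI subsetI)
    fix r assume "r \<in> (\<Union>B\<in>column_classes n M. set (class_rows B))"
    then obtain B where B: "B \<in> column_classes n M" "r \<in> set (class_rows B)" by blast
    then obtain j where j: "j < card B" "r = class_rows B ! j"
      using class_walk_props(3)[OF B(1)] by (metis in_set_conv_nth)
    then have "r \<in> col_ones n M (class_cols B ! j)" using class_walk_props(9)[OF B(1) j(1)] by simp
    then show "r \<in> {1..n}" by (simp add: col_ones_def)
  next
    fix r assume r: "r \<in> {1..n}"
    then obtain c where c: "c \<in> row_ones n M r"
      using card_row_ones[OF r] by (metis card.empty ex_in_conv zero_neq_numeral)
    then have "c \<in> {1..n}" "r \<in> col_ones n M c"
      using mem_row_ones_iff_mem_col_ones[OF r] by (auto simp: row_ones_def)
    moreover obtain B where "B \<in> column_classes n M" "c \<in> B"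
      using partition_onD1[OF partition_on_column_classes] \<open>c \<in> {1..n}\<close> by blast
    ultimately show "r \<in> (\<Union>B\<in>column_classes n M. set (class_rows B))"
      using class_walk_props(10) by blast
  qed
next
  fix B B' x assume B: "B \<in> column_classes n M" "B' \<in> column_classes n M"
  {
    assume "x \<in> set (class_cols B)" "x \<in> set (class_cols B')"
    then show "B = B'"
      using partition_on_block_eq[OF partition_on_column_classes B] class_walk_props(1) B by simp
  next
    assume x: "x \<in> set (class_rows B)" "x \<in> set (class_rows B')"
    then have "x \<in> {1..n}"
      using class_walk_props(3,9)[OF B(1)]
      by (metis col_ones_subset in_set_conv_nth subsetD insertI1)
    then obtain c where "c \<in> row_ones n M x"
      using card_row_ones by (metis card.empty ex_in_conv zero_neq_numeral)
    then show "B = B'"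
      using partition_on_block_eq[OF partition_on_column_classes B] class_walk_props(11) B x
      by blast
  }
qed

lemma cycle_matrix_classes:
  "triple_matrix n (cycle_triples (column_classes n M) card class_cols class_rows) = M"
proof (rule binary_matrix_eqI[OF binary_matrix_triple_matrix binary_matrix_M])
  interpret F: normalized_cycle_family n "column_classes n M" card class_cols class_rows
    by (rule normalized_cycle_family_classes)
  fix c assume "c \<in> {1..n}"
  then obtain B j where "B \<in> column_classes n M" "j < card B" "class_cols B ! j = c"
    by (rule F.obtain_CL_index)
  then show "col_ones n F.M c = col_ones n M c"
    using F.col_ones_CL_nth class_walk_props(9) by metis
qed

lemma in_Phi_image: "M \<in> Phi n ` Dn n"
proof -
  interpret F: normalized_cycle_family n "column_classes n M" card class_cols class_rows
    by (rule normalized_cycle_family_classes)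
  show ?thesis using F.datum_in_Dn F.Phi_datum cycle_matrix_classes by (metis image_eqI)
qed

end

theorem theorem1:
  fixes n :: nat
  assumes "n \<ge> 2"
  shows "(\<forall>D\<in>Dn n. well_defined n D \<and> Phi n D \<in> Lambda2 n) \<and>
         inj_on (Phi n) (Dn n) \<and>
         Lambda2 n \<subseteq> Phi n ` Dn n"
proof (intro conjI ballI subsetI)
  fix D assume "D \<in> Dn n"
  then interpret cycle_family n "pairs n D" fst "col_cycle D" "row_cycle D"
    by (rule Dn_member.cycle_family[OF Dn_member.intro])
  show "well_defined n D"
    using cycle_triples_well_defined by (simp add: well_defined_def Rtrip_eq_cycle_triples)
  show "Phi n D \<in> Lambda2 n"
    using cycle_matrix_in_Lambda2 by (simp add: Phi_eq_triple_matrix Rtrip_eq_cycle_triples)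
next
  show "inj_on (Phi n) (Dn n)" by (rule inj_on_Phi)
next
  fix M assume "M \<in> Lambda2 n"
  then show "M \<in> Phi n ` Dn n" by (rule Lambda2_matrix.in_Phi_image[OF Lambda2_matrix.intro])
qed

end
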